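(* Consider the impulsive time-delay system \[ \dot x(t)=f(t,x_t),\ t\neq t_k;\qquad \Delta x(t)=g(t,x_{t^-}),\ t=t_k;\qquad x_{t_0}=\phi, \] as described in the context. Suppose there exist $V_1\in\mathcal V_0$, $V_2\in\mathcal V_0^*$, functions $\alpha_1,\alpha_2,\alpha_3\in\mathcal K_\infty$, and constants $c\in\mathbb R$, $\varrho_1,\varrho_2,\mu\ge 0$, $\lambda>0$, $\kappa>0$ such that, for all $t\in\mathbb R^+$ and all $\psi\in\mathcal{PC}_\tau$: \begin{itemize} \item[(i)] $\alpha_1(\|\psi(0)\|)\le V_1(t,\psi(0))\le \alpha_2(\|\psi(0)\|)$ and $0\le V_2(t,\psi)\le \alpha_3(\|\psi\|_\tau)$; \item[(ii)] the functional $V(t,\psi):=V_1(t,\psi(0))+V_2(t,\psi)$ satisfies $\mathrm D^+V(t,\psi)\le -c\,V(t,\psi)$; \item[(iii)] $V_1(t,\psi(0)+g(t,\psi))\le \varrho_1 V_1(t^-,\psi(0))+\varrho_2\sup_{s\in[-\tau,0]}V_1(t^-+s,\psi(s))$, where $V_1(t^-+s,y):=\lim_{h\to0^+}V_1(t+s-h,y)$; \item[(iv)] $V_2(t,\psi)\le \kappa\sup_{s\in[-\tau,0]}V_1(t+s,\psi(s))$; \item[(v)] there is a constant $\sigma\in\mathbb R$ such that for all $t>s\ge t_0$, \[ -\sigma N(t,s)-(c-\lambda)(t-s)\le \mu, \] where $\sigma$ is determined as follows (and one of the four cases below holds): \begin{itemize} \item if $c>0$ and $\varrho_1\ge 1$: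 $\sigma=-\ln(\varrho_1+\varrho_2e^{c\tau})\ (\le 0)$; \item if $c>0$, $\varrho_1<1$ and $\varrho_1+[(1-\varrho_1)\kappa+\varrho_2]e^{c\tau}\ge 1$: $\sigma=-\ln\big(\varrho_1+[(1-\varrho_1)\kappa+\varrho_2]e^{c\tau}\big)\ (\le 0)$; \item if $c>0$, $\varrho_1<1$ and $\varrho_1+[(1-\varrho_1)\kappa+\varrho_2]e^{c\tau}<1$: $\sigma>0$ is a constant with $\varrho_1e^{\sigma}+[(1-\varrho_1)\kappa+\varrho_2]e^{c\tau}e^{\sigma N(t_k,t_k-\tau)}\le 1$ for all $k\in\mathbb N$; \item if $c\le 0$, $\varrho_1<1$ and $\varrho_1+(1-\varrho_1)\kappa+\varrho_2<1$: $\sigma>0$ is a constant with $\varrho_1e^{\sigma}+[(1-\varrho_1)\kappa+\varrho_2]e^{\sigma N(t_k,t_k-\tau)}\le 1$ for all $k\in\mathbb N$. \end{itemize} \end{itemize} Then the system is globally asymptotically stable.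
   Context: Let $\tau>0$ be the maximal delay, $\mathcal{PC}_\tau=\mathcal{PC}([-\tau,0],\mathbb R^n)$ the space of piecewise right-continuous functions $[-\tau,0]\to\mathbb R^n$ with norm $\|\varphi\|_\tau=\sup_{s\in[-\tau,0]}\|\varphi(s)\|$ ($\|\cdot\|$ Euclidean). For a piecewise right-continuous $x:[-\tau,\infty)\to\mathbb R^n$, $x_t(s)=x(t+s)$, and $x_{t^-}(s)=x(t+s)$ for $s\in[-\tau,0)$, $x_{t^-}(0)=x(t^-)$ (left limit). $\Delta x(t)=x(t)-x(t^-)$; solutions are right-continuous at impulse times. The maps $f,g:\mathbb R^+\times\mathcal{PC}_\tau\to\mathbb R^n$ satisfy $f(t,0)=g(t,0)=0$, and are assumed regular enough that for every $t_0\ge0$ and $\phi\in\mathcal{PC}_\tau$ there is a unique solution $x(t)=x(t,t_0,\phi)$ on a maximal interval $[t_0-\tau,t_0+\Gamma)$, $0<\Gamma\le\infty$, and that solutions which remain bounded extend globally. The impulse times $t_0<t_1<t_2<\cdots$ form a fixed strictly increasing sequence with $t_k\to\infty$. $N(t,s)$ is the number of impulse times in $(s,t]$ for $t>s\ge t_0$. A function $\alpha:\mathbb R^+\to\mathbb R^+$ is of class $\mathcal K_\infty$ if continuous, strictly increasing, unbounded, with $\alpha(0)=0$. Class $\mathcal V_0$: functions $V:\mathbb R^+\times\mathbb R^n\to\mathbb R^+$ such that for every piecewise right-continuous $x$, $t\mapsto V(t,x(t))$ is piecewise right-continuous and can be discontinuous at $t^*$ only if $x$ is discontinuous at $t^*$.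 Class $\mathcal V_0^*$: functionals $V:\mathbb R^+\times\mathcal{PC}_\tau\to\mathbb R^+$ such that for every piecewise right-continuous $x:[-\tau,\infty)\to\mathbb R^n$, $t\mapsto V(t,x_t)$ is continuous, and $V$ is locally Lipschitz in its second argument. The upper right-hand derivative along the system is $\mathrm D^+V(t,\psi)=\limsup_{h\to0^+}\frac{V(t+h,x^{(t,\psi)}_{t+h})-V(t,\psi)}{h}$, where $x^{(t,\psi)}$ is the solution with $x_t=\psi$ and $h$ is small enough that $(t,t+h)$ contains no impulse time. Global asymptotic stability (GAS): the trivial solution is stable (for every $\varepsilon>0$ there is $\delta>0$ with $\|\phi\|_\tau<\delta\Rightarrow\|x(t,t_0,\phi)\|<\varepsilon$ for all $t\ge t_0$) and $\lim_{t\to\infty}\|x(t,t_0,\phi)\|=0$ for every $\phi\in\mathcal{PC}_\tau$. *)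

theory Defs
  imports "HOL-Analysis.Analysis"
begin

definition pwrc_on :: "real \<Rightarrow> real \<Rightarrow> (real \<Rightarrow> 'a::topological_space) \<Rightarrow> bool" where
  "pwrc_on a b x \<longleftrightarrow>
     (\<forall>t\<in>{a..<b}. continuous (at_right t) x) \<and>
     (\<forall>t\<in>{a<..b}. \<exists>l. (x \<longlongrightarrow> l) (at_left t)) \<and>
     finite {t\<in>{a..b}. \<not> continuous (at t within {a..b}) x}"

definition PC :: "real \<Rightarrow> (real \<Rightarrow> 'a::real_normed_vector) set" where
  "PC \<tau> = {\<psi>. pwrc_on (-\<tau>) 0 \<psi> \<and> (\<forall>s. s \<notin> {-\<tau>..0} \<longrightarrow> \<psi> s = 0)}"

definition normtau :: "real \<Rightarrow> (real \<Rightarrow> 'a::real_normed_vector) \<Rightarrow> real" where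
  "normtau \<tau> \<psi> = (SUP s\<in>{-\<tau>..0}. norm (\<psi> s))"

definition seg :: "real \<Rightarrow> (real \<Rightarrow> 'a::real_normed_vector) \<Rightarrow> real \<Rightarrow> (real \<Rightarrow> 'a)" where
  "seg \<tau> x t = (\<lambda>s. if -\<tau> \<le> s \<and> s \<le> 0 then x (t + s) else 0)"

definition segm :: "real \<Rightarrow> (real \<Rightarrow> 'a::real_normed_vector) \<Rightarrow> real \<Rightarrow> (real \<Rightarrow> 'a)" where
  "segm \<tau> x t = (\<lambda>s. if -\<tau> \<le> s \<and> s < 0 then x (t + s)
                     else if s = 0 then Lim (at_left t) x else 0)"

definition Nimp :: "(nat \<Rightarrow> real) \<Rightarrow> real \<Rightarrow> real \<Rightarrow> real" where
  "Nimp tk t s = real (card {k. s < tk k \<and> tk k \<le> t})"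

definition is_sol ::
  "(real \<Rightarrow> (real \<Rightarrow> 'a::real_normed_vector) \<Rightarrow> 'a) \<Rightarrow> (real \<Rightarrow> (real \<Rightarrow> 'a) \<Rightarrow> 'a) \<Rightarrow>
   real \<Rightarrow> (nat \<Rightarrow> real) \<Rightarrow> real \<Rightarrow> (real \<Rightarrow> 'a) \<Rightarrow> ereal \<Rightarrow> (real \<Rightarrow> 'a) \<Rightarrow> bool" where
  "is_sol f g \<tau> tk t0 \<phi> T x \<longleftrightarrow>
     ereal t0 < T \<and>
     seg \<tau> x t0 = \<phi> \<and>
     (\<forall>b. t0 - \<tau> \<le> b \<and> ereal b < T \<longrightarrow> pwrc_on (t0 - \<tau>) b x) \<and>
     (\<forall>t. t0 \<le> t \<and> ereal t < T \<longrightarrow>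
        (x has_vector_derivative f t (seg \<tau> x t)) (at t within {t..})) \<and>
     (\<forall>t. t0 < t \<and> ereal t < T \<and> t \<notin> range tk \<longrightarrow> isCont x t) \<and>
     (\<forall>k. t0 < tk k \<and> ereal (tk k) < T \<longrightarrow>
        x (tk k) = Lim (at_left (tk k)) x + g (tk k) (segm \<tau> x (tk k)))"

definition is_max_sol ::
  "(real \<Rightarrow> (real \<Rightarrow> 'a::real_normed_vector) \<Rightarrow> 'a) \<Rightarrow> (real \<Rightarrow> (real \<Rightarrow> 'a) \<Rightarrow> 'a) \<Rightarrow>
   real \<Rightarrow> (nat \<Rightarrow> real) \<Rightarrow> real \<Rightarrow> (real \<Rightarrow> 'a) \<Rightarrow> ereal \<Rightarrow> (real \<Rightarrow> 'a) \<Rightarrow> bool" where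
  "is_max_sol f g \<tau> tk t0 \<phi> T x \<longleftrightarrow>
     is_sol f g \<tau> tk t0 \<phi> T x \<and> (\<forall>T' y. is_sol f g \<tau> tk t0 \<phi> T' y \<longrightarrow> T' \<le> T)"

definition class_Kinf :: "(real \<Rightarrow> real) \<Rightarrow> bool" where
  "class_Kinf \<alpha> \<longleftrightarrow> continuous_on {0..} \<alpha> \<and> strict_mono_on {0..} \<alpha> \<and>
     (\<forall>M. \<exists>r\<ge>0. \<alpha> r > M) \<and> \<alpha> 0 = 0"

definition class_V0 :: "(real \<Rightarrow> 'a::real_normed_vector \<Rightarrow> real) \<Rightarrow> bool" where
  "class_V0 V \<longleftrightarrow> (\<forall>t\<ge>0. \<forall>y. V t y \<ge> 0) \<and>
     (\<forall>x::real \<Rightarrow> 'a. (\<forall>b\<ge>0. pwrc_on 0 b x) \<longrightarrow>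
        (\<forall>b\<ge>0. pwrc_on 0 b (\<lambda>t. V t (x t))) \<and>
        (\<forall>t\<ge>0. continuous (at t within {0..}) x \<longrightarrow>
                continuous (at t within {0..}) (\<lambda>t. V t (x t))))"

definition class_V0star :: "real \<Rightarrow> (real \<Rightarrow> (real \<Rightarrow> 'a::real_normed_vector) \<Rightarrow> real) \<Rightarrow> bool" where
  "class_V0star \<tau> V \<longleftrightarrow> (\<forall>t\<ge>0. \<forall>\<psi>\<in>PC \<tau>. V t \<psi> \<ge> 0) \<and>
     (\<forall>x::real \<Rightarrow> 'a. (\<forall>b\<ge>-\<tau>. pwrc_on (-\<tau>) b x) \<longrightarrow>
        continuous_on {0..} (\<lambda>t. V t (seg \<tau> x t))) \<and>
     (\<forall>t\<ge>0. \<forall>\<psi>\<in>PC \<tau>. \<exists>r>0. \<exists>L. \<forall>\<phi>1\<in>PC \<tau>. \<forall>\<phi>2\<in>PC \<tau>.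
        normtau \<tau> (\<lambda>s. \<phi>1 s - \<psi> s) < r \<and> normtau \<tau> (\<lambda>s. \<phi>2 s - \<psi> s) < r \<longrightarrow>
        \<bar>V t \<phi>1 - V t \<phi>2\<bar> \<le> L * normtau \<tau> (\<lambda>s. \<phi>1 s - \<phi>2 s))"

text \<open>Convention: V_1 is only given on R^+; at negative times (needed in the
suprema over [t-tau,t]) it is extended constantly, V_1(t,y) := V_1(0,y) for t<0.\<close>
definition V1ext :: "(real \<Rightarrow> 'a \<Rightarrow> real) \<Rightarrow> real \<Rightarrow> 'a \<Rightarrow> real" where
  "V1ext V r y = V (max r 0) y"

definition V1left :: "(real \<Rightarrow> 'a \<Rightarrow> real) \<Rightarrow> real \<Rightarrow> 'a \<Rightarrow> real" where
  "V1left V r y = Lim (at_left r) (\<lambda>u. V1ext V u y)"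

end

theory Submission
  imports Defs
begin

text \<open>Along a solution, \<open>V(t) = V\<^sub>1(t, x(t)) + V\<^sub>2(t, x\<^sub>t)\<close> satisfies \<open>D\<^sup>+V \<le> -c V\<close>, so between
  impulses it decays at least like \<open>e\<^sup>-\<^sup>c\<^sup>(\<^sup>t\<^sup>-\<^sup>s\<^sup>)\<close> (comparison principle for Dini
  derivatives). At an impulse time \<open>V\<^sub>2\<close> does not jump, and conditions (iii) and (iv)
  bound the new value of \<open>V\<close> by the value just before the impulse and by \<open>V\<^sub>1\<close> on the
  preceding delay window; the comparison function can be larger there at most by the
  factor \<open>window_factor\<close>, and condition (v) makes the resulting gain at most \<open>e\<^sup>-\<^sup>\<sigma>\<close>.
  Induction over the impulses gives
  \<open>V(t) \<le> (\<alpha>\<^sub>2 + \<alpha>\<^sub>3)(\<parallel>\<phi>\<parallel>\<^sub>\<tau>) e\<^sup>-\<^sup>\<sigma>\<^sup>N\<^sup>(\<^sup>t\<^sup>,\<^sup>t\<^sub>0\<^sup>) \<^sup>- \<^sup>c\<^sup>(\<^sup>t\<^sup>-\<^sup>t\<^sub>0\<^sup>) \<le> (\<alpha>\<^sub>2 + \<alpha>\<^sub>3)(\<parallel>\<phi>\<parallel>\<^sub>\<tau>) e\<^sup>\<mu> e\<^sup>-\<^sup>\<lambda>\<^sup>(\<^sup>t\<^sup>-\<^sup>t\<^sub>0\<^sup>)\<close>,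
  and \<open>\<alpha>\<^sub>1(\<parallel>x(t)\<parallel>) \<le> V(t)\<close> turns this into uniform stability, boundedness (hence global
  existence) and convergence to \<open>0\<close>.\<close>

section \<open>Piecewise right-continuous functions\<close>

lemma pwrc_on_cong:
  assumes "pwrc_on a b x" "\<And>t. t \<in> {a..b} \<Longrightarrow> y t = x t"
  shows "pwrc_on a b y"
proof -
  have R: "continuous (at_right t) y" if "t \<in> {a..<b}" for t
  proof -
    have "continuous (at_right t) x" using assms(1) that unfolding pwrc_on_def by auto
    hence "(x \<longlongrightarrow> x t) (at_right t)" by (simp add: continuous_within)
    moreover have "eventually (\<lambda>s. x s = y s) (at_right t)"
      using eventually_at_right_real[of t b] that assms(2) by (auto elim!: eventually_mono)
    ultimately have "(y \<longlongrightarrow> x t) (at_right t)" using tendsto_cong by blast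
    thus ?thesis using assms(2)[of t] that by (simp add: continuous_within)
  qed
  have L: "\<exists>l. (y \<longlongrightarrow> l) (at_left t)" if "t \<in> {a<..b}" for t
  proof -
    have "\<exists>l. (x \<longlongrightarrow> l) (at_left t)" using assms(1) that unfolding pwrc_on_def by blast
    then obtain l where "(x \<longlongrightarrow> l) (at_left t)" by blast
    moreover have "eventually (\<lambda>s. x s = y s) (at_left t)"
      using eventually_at_left_real[of a t] that assms(2) by (auto elim!: eventually_mono)
    ultimately show ?thesis using tendsto_cong by blast
  qed
  have "continuous (at t within {a..b}) y = continuous (at t within {a..b}) x" if "t \<in> {a..b}" for t
  proof -
    have "eventually (\<lambda>s. s \<in> {a..b}) (at t within {a..b})"
      by (simp add: eventually_at_filter)
    hence "eventually (\<lambda>s. x s = y s) (at t within {a..b})"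
      using assms(2) by (auto elim!: eventually_mono)
    thus ?thesis using that assms(2)[of t] by (simp add: continuous_within tendsto_cong)
  qed
  hence "{t\<in>{a..b}. \<not> continuous (at t within {a..b}) y} =
         {t\<in>{a..b}. \<not> continuous (at t within {a..b}) x}" by auto
  thus ?thesis using assms(1) R L unfolding pwrc_on_def by auto
qed

lemma pwrc_on_subinterval:
  assumes "pwrc_on a b x" "a \<le> a'" "b' \<le> b"
  shows "pwrc_on a' b' x"
proof -
  have "{t\<in>{a'..b'}. \<not> continuous (at t within {a'..b'}) x} \<subseteq>
        {t\<in>{a..b}. \<not> continuous (at t within {a..b}) x}"
    using assms(2,3) by (auto intro: continuous_within_subset)
  then show ?thesis using assms unfolding pwrc_on_def by (auto intro: finite_subset)
qed

lemma continuous_imp_pwrc_on: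
  assumes "continuous_on UNIV y"
  shows "pwrc_on a b y"
proof -
  have ic: "isCont y t" for t using assms by (simp add: continuous_on_eq_continuous_at)
  have E: "{t\<in>{a..b}. \<not> continuous (at t within {a..b}) y} = {}"
    using ic by (auto intro: continuous_within_subset[of _ UNIV])
  have "\<exists>l. (y \<longlongrightarrow> l) (at_left t)" for t
    using ic[of t] by (auto simp: isCont_def intro: tendsto_mono[OF at_le])
  moreover have "continuous (at_right t) y" for t
    using ic[of t] by (auto intro: continuous_within_subset[of _ UNIV])
  ultimately show ?thesis unfolding pwrc_on_def E by simp
qed

lemma filterlim_shift_at_left: "filterlim (\<lambda>u. t + u) (at_left (t + s)) (at_left (s::real))"
  unfolding filterlim_at by (auto intro!: tendsto_eq_intros simp: eventually_at_filter)

lemma filterlim_shift_at_right: "filterlim (\<lambda>u. t + u) (at_right (t + s)) (at_right (s::real))"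
  unfolding filterlim_at by (auto intro!: tendsto_eq_intros simp: eventually_at_filter)

lemma tendsto_at_left_of_continuous_on:
  fixes F :: "real \<Rightarrow> 'b::topological_space"
  assumes "continuous_on {p..s} F" "p < s"
  shows "(F \<longlongrightarrow> F s) (at_left s)"
proof -
  have "continuous (at s within {p..s}) F" using assms by (simp add: continuous_on_eq_continuous_within)
  thus ?thesis using at_within_Icc_at_left[OF assms(2)] by (simp add: continuous_within)
qed

lemma pwrc_on_shift:
  assumes "pwrc_on a b x"
  shows "pwrc_on (a - t) (b - t) (\<lambda>s. x (t + s))"
proof -
  have R: "continuous (at_right s) (\<lambda>s. x (t + s))" if "s \<in> {a-t..<b-t}" for s
  proof -
    have "(x \<longlongrightarrow> x (t+s)) (at_right (t+s))"
      using assms that unfolding pwrc_on_def by (auto simp: continuous_within)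
    from filterlim_compose[OF this filterlim_shift_at_right] show ?thesis
      by (simp add: continuous_within o_def)
  qed
  have L: "\<exists>l. ((\<lambda>s. x (t + s)) \<longlongrightarrow> l) (at_left s)" if "s \<in> {a-t<..b-t}" for s
  proof -
    have "\<exists>l. (x \<longlongrightarrow> l) (at_left (t+s))" using assms that unfolding pwrc_on_def by auto
    then obtain l where "(x \<longlongrightarrow> l) (at_left (t+s))" by blast
    from filterlim_compose[OF this filterlim_shift_at_left] show ?thesis by auto
  qed
  have "{s\<in>{a-t..b-t}. \<not> continuous (at s within {a-t..b-t}) (\<lambda>s. x (t + s))}
     \<subseteq> (\<lambda>u. u - t) ` {u\<in>{a..b}. \<not> continuous (at u within {a..b}) x}"
  proof
    fix s assume s: "s \<in> {s\<in>{a-t..b-t}. \<not> continuous (at s within {a-t..b-t}) (\<lambda>s. x (t + s))}"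
    have "\<not> continuous (at (t+s) within {a..b}) x"
    proof
      assume c: "continuous (at (t+s) within {a..b}) x"
      have "continuous (at s within {a-t..b-t}) (\<lambda>s. t + s)" by (intro continuous_intros)
      moreover have "(\<lambda>s. t + s) ` {a-t..b-t} = {a..b}"
        using image_add_atLeastAtMost[of t "a-t" "b-t"] by (simp add: add.commute)
      ultimately have "continuous (at s within {a-t..b-t}) (x \<circ> (\<lambda>s. t + s))"
        using c by (intro continuous_within_compose) auto
      with s show False by (simp add: o_def)
    qed
    with s show "s \<in> (\<lambda>u. u - t) ` {u\<in>{a..b}. \<not> continuous (at u within {a..b}) x}"
      by (intro image_eqI[of _ _ "t+s"]) auto
  qed
  moreover have "finite {u\<in>{a..b}. \<not> continuous (at u within {a..b}) x}"
    using assms unfolding pwrc_on_def by auto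
  ultimately show ?thesis using R L unfolding pwrc_on_def by (meson finite_imageI finite_subset)
qed

definition extend_pc :: "real \<Rightarrow> real \<Rightarrow> (real \<Rightarrow> 'a::zero) \<Rightarrow> 'a \<Rightarrow> real \<Rightarrow> 'a" where
  "extend_pc a b x L t = (if t < a then 0 else if t < b then x t else L)"

lemma continuous_at_right_extend_pc:
  assumes px: "pwrc_on a b x" and ab: "a \<le> b"
  shows "continuous (at_right t) (extend_pc a b x L)"
proof -
  let ?e = "extend_pc a b x L"
  consider "t < a" | "a \<le> t" "t < b" | "b \<le> t" by linarith
  hence "(?e \<longlongrightarrow> ?e t) (at_right t)"
  proof cases
    case 1
    have "\<forall>\<^sub>F s in at_right t. 0 = ?e s"
      using eventually_at_right_real[OF 1] by (auto simp: extend_pc_def elim!: eventually_mono)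
    hence "(?e \<longlongrightarrow> 0) (at_right t)" by (rule Lim_transform_eventually[OF tendsto_const])
    with 1 show ?thesis by (simp add: extend_pc_def)
  next
    case 2
    have "continuous (at_right t) x" using px 2 unfolding pwrc_on_def by auto
    hence "(x \<longlongrightarrow> x t) (at_right t)" by (simp add: continuous_within)
    moreover have "\<forall>\<^sub>F s in at_right t. x s = ?e s"
      using eventually_at_right_real[OF 2(2)] 2 by (auto simp: extend_pc_def elim!: eventually_mono)
    ultimately have "(?e \<longlongrightarrow> x t) (at_right t)" by (rule Lim_transform_eventually)
    with 2 show ?thesis by (simp add: extend_pc_def)
  next
    case 3
    have "\<forall>\<^sub>F s in at_right t. L = ?e s"
      using eventually_at_right_less[of t] 3 ab by (auto simp: extend_pc_def elim!: eventually_mono)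
    hence "(?e \<longlongrightarrow> L) (at_right t)" by (rule Lim_transform_eventually[OF tendsto_const])
    with 3 ab show ?thesis by (simp add: extend_pc_def)
  qed
  thus ?thesis by (simp add: continuous_within)
qed

lemma left_limit_extend_pc:
  assumes px: "pwrc_on a b x" and ab: "a \<le> b"
  shows "\<exists>l. (extend_pc a b x L \<longlongrightarrow> l) (at_left t)"
proof -
  let ?e = "extend_pc a b x L"
  consider "t \<le> a" | "a < t" "t \<le> b" | "b < t" by linarith
  thus ?thesis
  proof cases
    case 1
    have "\<forall>\<^sub>F s in at_left t. 0 = ?e s" using 1 by (auto simp: extend_pc_def eventually_at_filter)
    hence "(?e \<longlongrightarrow> 0) (at_left t)" by (rule Lim_transform_eventually[OF tendsto_const])
    thus ?thesis by blast
  next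
    case 2
    have "\<exists>l. (x \<longlongrightarrow> l) (at_left t)" using px 2 unfolding pwrc_on_def by auto
    then obtain l where "(x \<longlongrightarrow> l) (at_left t)" by blast
    moreover have "\<forall>\<^sub>F s in at_left t. x s = ?e s"
      using eventually_at_left_real[OF 2(1)] 2 by (auto simp: extend_pc_def elim!: eventually_mono)
    ultimately have "(?e \<longlongrightarrow> l) (at_left t)" by (rule Lim_transform_eventually)
    thus ?thesis by blast
  next
    case 3
    have "\<forall>\<^sub>F s in at_left t. L = ?e s"
      using eventually_at_left_real[OF 3] ab by (auto simp: extend_pc_def elim!: eventually_mono)
    hence "(?e \<longlongrightarrow> L) (at_left t)" by (rule Lim_transform_eventually[OF tendsto_const])
    thus ?thesis by blast
  qed
qed

lemma isCont_extend_pc: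
  assumes ab: "a \<le> b" and t: "t \<noteq> a" "t \<noteq> b" "a < t \<Longrightarrow> t < b \<Longrightarrow> continuous (at t within {a..b}) x"
  shows "isCont (extend_pc a b x L) t"
proof -
  let ?e = "extend_pc a b x L"
  consider "t < a" | "a < t" "t < b" | "b < t" using t by fastforce
  thus ?thesis
  proof cases
    case 1
    have "\<forall>\<^sub>F s in nhds t. s \<in> {..<a}" using 1 by (intro eventually_nhds_in_open) auto
    hence "\<forall>\<^sub>F s in nhds t. (\<lambda>_. 0) s = ?e s" by (auto simp: extend_pc_def elim!: eventually_mono)
    thus ?thesis using isCont_cong[of "\<lambda>_. 0" ?e t] by simp
  next
    case 2
    hence "isCont x t" using t(3) at_within_Icc_at[OF 2] by simp
    moreover have "\<forall>\<^sub>F s in nhds t. s \<in> {a<..<b}" using 2 by (intro eventually_nhds_in_open) auto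
    hence "\<forall>\<^sub>F s in nhds t. x s = ?e s" by (auto simp: extend_pc_def elim!: eventually_mono)
    ultimately show ?thesis using isCont_cong[of x ?e t] by simp
  next
    case 3
    have "\<forall>\<^sub>F s in nhds t. s \<in> {b<..}" using 3 by (intro eventually_nhds_in_open) auto
    hence "\<forall>\<^sub>F s in nhds t. (\<lambda>_. L) s = ?e s" using ab by (auto simp: extend_pc_def elim!: eventually_mono)
    thus ?thesis using isCont_cong[of "\<lambda>_. L" ?e t] by simp
  qed
qed

lemma pwrc_on_extend_pc:
  fixes x :: "real \<Rightarrow> 'a::real_normed_vector"
  assumes px: "pwrc_on a b x" and ab: "a \<le> b"
  shows "pwrc_on c d (extend_pc a b x L)"
proof -
  let ?D = "{u\<in>{a..b}. \<not> continuous (at u within {a..b}) x}"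
  have "{t\<in>{c..d}. \<not> continuous (at t within {c..d}) (extend_pc a b x L)} \<subseteq> {a, b} \<union> ?D"
  proof
    fix t assume t: "t \<in> {t\<in>{c..d}. \<not> continuous (at t within {c..d}) (extend_pc a b x L)}"
    show "t \<in> {a, b} \<union> ?D"
    proof (rule ccontr)
      assume "t \<notin> {a, b} \<union> ?D"
      hence "isCont (extend_pc a b x L) t" by (intro isCont_extend_pc[OF ab]) auto
      with t show False using continuous_at_imp_continuous_within by blast
    qed
  qed
  moreover have "finite ?D" using px unfolding pwrc_on_def by auto
  ultimately have "finite {t\<in>{c..d}. \<not> continuous (at t within {c..d}) (extend_pc a b x L)}"
    by (auto intro: finite_subset)
  thus ?thesis
    using continuous_at_right_extend_pc[OF assms] left_limit_extend_pc[OF assms] unfolding pwrc_on_def by blast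
qed

lemma pwrc_on_locally_bounded:
  fixes x :: "real \<Rightarrow> 'a::real_normed_vector"
  assumes px: "pwrc_on a b x" and t: "t \<in> {a..b}"
  shows "\<exists>e>0. \<exists>M. \<forall>s\<in>{a..b}. dist s t < e \<longrightarrow> norm (x s) \<le> M"
proof -
  have near: "norm (x s) \<le> norm l + 1" if "dist (x s) l < 1" for s and l :: 'a
    using that norm_triangle_ineq2[of "x s" l] by (simp add: dist_norm)
  obtain e1 M1 where e1: "e1 > 0" and M1: "\<forall>s\<in>{a..b}. t < s \<and> s < t + e1 \<longrightarrow> norm (x s) \<le> M1"
  proof (cases "t < b")
    case True
    have "(x \<longlongrightarrow> x t) (at_right t)" using px t True unfolding pwrc_on_def by (auto simp: continuous_within)
    hence "eventually (\<lambda>s. dist (x s) (x t) < 1) (at_right t)" by (rule tendstoD) simp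
    then obtain d where "d > t" "\<forall>s>t. s < d \<longrightarrow> dist (x s) (x t) < 1"
      unfolding eventually_at_right_field by blast
    thus ?thesis using near by (intro that[of "d - t" "norm (x t) + 1"]) auto
  next
    case False
    show ?thesis by (rule that[of 1 0]) (use False t in auto)
  qed
  obtain e2 M2 where e2: "e2 > 0" and M2: "\<forall>s\<in>{a..b}. t - e2 < s \<and> s < t \<longrightarrow> norm (x s) \<le> M2"
  proof (cases "a < t")
    case True
    obtain l where "(x \<longlongrightarrow> l) (at_left t)" using px t True unfolding pwrc_on_def by fastforce
    hence "eventually (\<lambda>s. dist (x s) l < 1) (at_left t)" by (rule tendstoD) simp
    then obtain d where "d < t" "\<forall>s>d. s < t \<longrightarrow> dist (x s) l < 1"
      unfolding eventually_at_left_field by blast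
    thus ?thesis using near by (intro that[of "t - d" "norm l + 1"]) auto
  next
    case False
    show ?thesis by (rule that[of 1 0]) (use False t in auto)
  qed
  have "norm (x s) \<le> max (norm (x t)) (max M1 M2)" if s: "s \<in> {a..b}" "dist s t < min e1 e2" for s
  proof -
    consider "s = t" | "t < s" | "s < t" by linarith
    thus ?thesis
    proof cases
      case 2
      hence "norm (x s) \<le> M1" using M1 s by (auto simp: dist_real_def)
      thus ?thesis by simp
    next
      case 3
      hence "norm (x s) \<le> M2" using M2 s by (auto simp: dist_real_def)
      thus ?thesis by simp
    qed simp
  qed
  moreover have "min e1 e2 > 0" using e1 e2 by simp
  ultimately show ?thesis by blast
qed

lemma pwrc_on_bounded:
  fixes x :: "real \<Rightarrow> 'a::real_normed_vector"
  assumes px: "pwrc_on a b x"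
  shows "\<exists>B. \<forall>s\<in>{a..b}. norm (x s) \<le> B"
proof -
  obtain e M where eM: "\<And>t. t \<in> {a..b} \<Longrightarrow> e t > 0 \<and> (\<forall>s\<in>{a..b}. dist s t < e t \<longrightarrow> norm (x s) \<le> M t)"
    using pwrc_on_locally_bounded[OF px] by metis
  have cov: "{a..b} \<subseteq> (\<Union>t\<in>{a..b}. ball t (e t))"
    using eM by (auto intro!: bexI)
  obtain C where C: "C \<subseteq> {a..b}" "finite C" "{a..b} \<subseteq> (\<Union>t\<in>C. ball t (e t))"
    by (rule compactE_image[OF compact_Icc _ cov]) auto
  show ?thesis
  proof (intro exI ballI)
    fix s assume s: "s \<in> {a..b}"
    then obtain t where t: "t \<in> C" "s \<in> ball t (e t)" using C by blast
    hence "norm (x s) \<le> M t" using eM[of t] C s by (auto simp: dist_commute)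
    also have "\<dots> \<le> Max (M ` C)" using t C by (intro Max_ge) auto
    finally show "norm (x s) \<le> Max (M ` C)" .
  qed
qed

lemma seg_in_PC: "pwrc_on (t - \<tau>) t y \<Longrightarrow> seg \<tau> y t \<in> PC \<tau>"
proof -
  assume "pwrc_on (t - \<tau>) t y"
  from pwrc_on_shift[OF this, of t] have "pwrc_on (-\<tau>) 0 (\<lambda>s. y (t + s))" by simp
  hence "pwrc_on (-\<tau>) 0 (seg \<tau> y t)" by (rule pwrc_on_cong) (simp add: seg_def)
  thus ?thesis unfolding PC_def seg_def by auto
qed

lemma segm_in_PC:
  assumes "\<tau> > 0" "pwrc_on (t - \<tau>) t y"
  shows "segm \<tau> y t \<in> PC \<tau>"
proof -
  let ?e = "extend_pc (t - \<tau>) t y (Lim (at_left t) y)"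
  have "pwrc_on (t - \<tau>) t ?e" using assms by (intro pwrc_on_extend_pc) auto
  from pwrc_on_shift[OF this, of t] have "pwrc_on (-\<tau>) 0 (\<lambda>s. ?e (t + s))" by simp
  hence "pwrc_on (-\<tau>) 0 (segm \<tau> y t)" by (rule pwrc_on_cong) (use assms in \<open>auto simp: segm_def extend_pc_def\<close>)
  thus ?thesis using assms unfolding PC_def segm_def by auto
qed

lemma normtau_ge:
  assumes "\<phi> \<in> PC \<tau>" "r \<in> {-\<tau>..0}"
  shows "norm (\<phi> r) \<le> normtau \<tau> \<phi>"
proof -
  obtain B where "\<forall>s\<in>{-\<tau>..0}. norm (\<phi> s) \<le> B"
    using assms(1) pwrc_on_bounded unfolding PC_def by blast
  hence "bdd_above ((\<lambda>s. norm (\<phi> s)) ` {-\<tau>..0})" by (intro bdd_aboveI[of _ B]) auto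
  thus ?thesis unfolding normtau_def using assms(2) by (rule cSUP_upper2) simp
qed

lemma normtau_nonneg: "\<phi> \<in> PC \<tau> \<Longrightarrow> \<tau> \<ge> 0 \<Longrightarrow> 0 \<le> normtau \<tau> \<phi>"
  using normtau_ge[of \<phi> \<tau> 0] by (meson atLeastAtMost_iff neg_le_0_iff_le norm_ge_zero order.trans order_refl)

section \<open>Class \<open>\<K>\<^sub>\<infinity>\<close> functions\<close>

lemma class_Kinf_mono: "class_Kinf \<alpha> \<Longrightarrow> 0 \<le> a \<Longrightarrow> a \<le> b \<Longrightarrow> \<alpha> a \<le> \<alpha> b"
  unfolding class_Kinf_def by (cases "a = b") (auto simp: strict_mono_on_def intro: less_imp_le)

lemma class_Kinf_nonneg: "class_Kinf \<alpha> \<Longrightarrow> 0 \<le> a \<Longrightarrow> 0 \<le> \<alpha> a"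
  using class_Kinf_mono[of \<alpha> 0 a] unfolding class_Kinf_def by auto

lemma class_Kinf_pos: "class_Kinf \<alpha> \<Longrightarrow> 0 < a \<Longrightarrow> 0 < \<alpha> a"
  unfolding class_Kinf_def by (metis atLeast_iff less_eq_real_def strict_mono_onD)

lemma class_Kinf_less_imp_less: "class_Kinf \<alpha> \<Longrightarrow> 0 \<le> a \<Longrightarrow> 0 \<le> b \<Longrightarrow> \<alpha> a < \<alpha> b \<Longrightarrow> a < b"
  by (meson class_Kinf_mono not_less)

lemma class_Kinf_add:
  assumes "class_Kinf \<alpha>" "class_Kinf \<beta>"
  shows "class_Kinf (\<lambda>r. \<alpha> r + \<beta> r)"
proof -
  have "strict_mono_on {0..} (\<lambda>r. \<alpha> r + \<beta> r)"
    using assms unfolding class_Kinf_def strict_mono_on_def by (auto intro: add_strict_mono)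
  moreover have "\<exists>r\<ge>0. \<alpha> r + \<beta> r > M" for M
  proof -
    obtain r where "r \<ge> 0" "\<alpha> r > M" using assms(1) unfolding class_Kinf_def by blast
    thus ?thesis using class_Kinf_nonneg[OF assms(2), of r] by (intro exI[of _ r]) auto
  qed
  ultimately show ?thesis using assms unfolding class_Kinf_def by (auto intro: continuous_on_add)
qed

lemma class_Kinf_small:
  assumes "class_Kinf \<alpha>" "\<eta> > 0"
  shows "\<exists>\<delta>>0. \<alpha> \<delta> < \<eta>"
proof -
  have "continuous (at 0 within {0..}) \<alpha>"
    using assms(1) unfolding class_Kinf_def by (simp add: continuous_on_eq_continuous_within)
  hence "(\<alpha> \<longlongrightarrow> 0) (at 0 within {0..})"
    using assms(1) unfolding class_Kinf_def by (simp add: continuous_within)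
  hence "(\<alpha> \<longlongrightarrow> 0) (at_right 0)" by (rule tendsto_mono[rotated]) (rule at_le, auto)
  hence "\<forall>\<^sub>F r in at_right 0. \<alpha> r < \<eta>" using assms(2) by (rule order_tendstoD)
  then obtain b where "b > 0" "\<forall>r>0. r < b \<longrightarrow> \<alpha> r < \<eta>"
    unfolding eventually_at_right_field by auto
  thus ?thesis by (intro exI[of _ "b / 2"]) auto
qed

lemma stable_of_class_Kinf_bound:
  fixes S :: "'p \<Rightarrow> ereal \<Rightarrow> (real \<Rightarrow> 'a::real_normed_vector) \<Rightarrow> bool"
  assumes K: "class_Kinf \<alpha>" "class_Kinf \<beta>" and C: "C > 0"
    and n_nonneg: "\<And>\<phi>. \<phi> \<in> P \<Longrightarrow> 0 \<le> n \<phi>"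
    and bound: "\<And>\<phi> T x u. \<phi> \<in> P \<Longrightarrow> S \<phi> T x \<Longrightarrow> t0 \<le> u \<Longrightarrow> ereal u < T \<Longrightarrow>
                  \<alpha> (norm (x u)) \<le> C * \<beta> (n \<phi>)"
  shows "\<forall>\<epsilon>>0. \<exists>\<delta>>0. \<forall>\<phi>\<in>P. n \<phi> < \<delta> \<longrightarrow>
           (\<forall>T x. S \<phi> T x \<longrightarrow> (\<forall>t. t0 \<le> t \<and> ereal t < T \<longrightarrow> norm (x t) < \<epsilon>))"
proof (intro allI impI)
  fix \<epsilon> :: real assume "\<epsilon> > 0"
  hence "\<alpha> \<epsilon> / C > 0" using class_Kinf_pos[OF K(1)] C by simp
  then obtain \<delta> where \<delta>: "\<delta> > 0" "\<beta> \<delta> < \<alpha> \<epsilon> / C" using class_Kinf_small[OF K(2)] by blast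
  have "norm (x t) < \<epsilon>"
    if "\<phi> \<in> P" "n \<phi> < \<delta>" "S \<phi> T x" "t0 \<le> t" "ereal t < T" for \<phi> T x t
  proof -
    have "\<alpha> (norm (x t)) \<le> C * \<beta> (n \<phi>)" using bound that by blast
    also have "\<dots> \<le> C * \<beta> \<delta>"
      using that C n_nonneg by (intro mult_left_mono class_Kinf_mono[OF K(2)]) auto
    also have "\<dots> < \<alpha> \<epsilon>" using \<delta>(2) C by (simp add: field_simps)
    finally show ?thesis using \<open>\<epsilon> > 0\<close> by (intro class_Kinf_less_imp_less[OF K(1) norm_ge_zero]) auto
  qed
  thus "\<exists>\<delta>>0. \<forall>\<phi>\<in>P. n \<phi> < \<delta> \<longrightarrow>
          (\<forall>T x. S \<phi> T x \<longrightarrow> (\<forall>t. t0 \<le> t \<and> ereal t < T \<longrightarrow> norm (x t) < \<epsilon>))"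
    using \<delta>(1) by blast
qed

lemma tendsto_zero_of_class_Kinf_exp_bound:
  fixes x :: "real \<Rightarrow> 'a::real_normed_vector"
  assumes K: "class_Kinf \<alpha>" and lam: "lam > 0"
    and bound: "\<And>u. t0 \<le> u \<Longrightarrow> \<alpha> (norm (x u)) \<le> C * exp (- lam * (u - t0))"
  shows "(x \<longlongrightarrow> 0) at_top"
proof (rule tendstoI)
  fix e :: real assume e: "e > 0"
  have "filterlim (\<lambda>u. lam * (- t0 + u)) at_top at_top"
    by (intro filterlim_tendsto_pos_mult_at_top[OF tendsto_const lam]
        filterlim_tendsto_add_at_top[OF tendsto_const filterlim_ident])
  hence "filterlim (\<lambda>u. - lam * (u - t0)) at_bot at_top"
    by (simp add: filterlim_uminus_at_bot algebra_simps)
  hence "((\<lambda>u. C * exp (- lam * (u - t0))) \<longlongrightarrow> C * 0) at_top"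
    by (intro tendsto_mult tendsto_const filterlim_compose[OF exp_at_bot])
  hence "\<forall>\<^sub>F u in at_top. C * exp (- lam * (u - t0)) < \<alpha> e"
    using class_Kinf_pos[OF K e] by (intro order_tendstoD) auto
  with eventually_ge_at_top[of t0] show "\<forall>\<^sub>F u in at_top. dist (x u) 0 < e"
  proof eventually_elim
    case (elim u)
    hence "\<alpha> (norm (x u)) < \<alpha> e" using bound[of u] by simp
    thus ?case using class_Kinf_less_imp_less[OF K] e by simp
  qed
qed

section \<open>Comparison principle for the upper right Dini derivative\<close>

lemma Dini_exp_bound_right:
  fixes w :: "real \<Rightarrow> real"
  assumes D: "Limsup (at_right 0) (\<lambda>h. ereal ((w (t + h) - w t) / h)) \<le> ereal (- c * w t)"
    and wb: "w t \<le> b" and b: "0 < b" and e: "0 < \<epsilon>"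
  shows "\<forall>\<^sub>F h in at_right 0. w (t + h) \<le> b * exp ((\<epsilon> - c) * h)"
proof -
  have "Limsup (at_right 0) (\<lambda>h. ereal ((w (t + h) - w t) / h)) < ereal (- c * w t + \<epsilon> * b)"
    using D b e by (auto intro: le_less_trans)
  hence "\<forall>\<^sub>F h in at_right 0. ereal ((w (t + h) - w t) / h) < ereal (- c * w t + \<epsilon> * b)"
    by (rule Limsup_lessD)
  moreover have "\<forall>\<^sub>F h in at_right 0. h \<in> {0<..<1 / (\<bar>c\<bar> + 1)}"
    by (rule eventually_at_right_real) simp
  ultimately show ?thesis
  proof eventually_elim
    case (elim h)
    hence h: "0 < h" "h * (\<bar>c\<bar> + 1) < 1" and q: "(w (t + h) - w t) / h < - c * w t + \<epsilon> * b"
      by (auto simp: field_simps)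
    have step: "w (t + h) - w t < h * (- c * w t + \<epsilon> * b)"
      using q h by (simp add: divide_less_eq mult.commute)
    have "c * h \<le> \<bar>c\<bar> * h" using h(1) by (intro mult_right_mono) auto
    moreover have "\<bar>c\<bar> * h + h < 1" using h(2) by (simp add: algebra_simps)
    ultimately have "c * h \<le> 1" using h(1) by linarith
    hence "w t * (1 - c * h) \<le> b * (1 - c * h)" using wb by (intro mult_right_mono) auto
    moreover have "b * (1 + (\<epsilon> - c) * h) \<le> b * exp ((\<epsilon> - c) * h)"
      using b exp_ge_add_one_self[of "(\<epsilon> - c) * h"] by (simp add: mult_left_mono)
    ultimately show ?case using step by (simp add: algebra_simps)
  qed
qed

lemma continuous_on_le_at_right_end:
  fixes w B :: "real \<Rightarrow> real"
  assumes "p < q" "continuous_on {p..q} w" "continuous_on {p..q} B" "\<And>s. s \<in> {p..<q} \<Longrightarrow> w s \<le> B s"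
  shows "w q \<le> B q"
proof (rule tendsto_le[OF trivial_limit_at_left_real])
  show "(B \<longlongrightarrow> B q) (at_left q)" "(w \<longlongrightarrow> w q) (at_left q)"
    using assms(1-3) by (auto intro: tendsto_at_left_of_continuous_on)
  show "\<forall>\<^sub>F s in at_left q. w s \<le> B s"
    using eventually_at_left_real[OF assms(1)] by eventually_elim (use assms(4) in auto)
qed

text \<open>The infimum of the points where the bound fails cannot exist: by
  \<open>Dini_exp_bound_right\<close> the bound propagates to the right of any point where it holds.\<close>
lemma Dini_exp_comparison_slack:
  fixes w :: "real \<Rightarrow> real"
  assumes cont: "continuous_on {p..q} w" and w0: "0 \<le> w p" and e: "0 < \<epsilon>"
    and D: "\<And>t. t \<in> {p..<q} \<Longrightarrow>
              Limsup (at_right 0) (\<lambda>h. ereal ((w (t + h) - w t) / h)) \<le> ereal (- c * w t)"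
    and t: "t \<in> {p..q}"
  shows "w t \<le> (w p + \<epsilon>) * exp ((\<epsilon> - c) * (t - p))"
proof (rule ccontr)
  define B where "B s = (w p + \<epsilon>) * exp ((\<epsilon> - c) * (s - p))" for s
  define bad where "bad = {s\<in>{p..q}. B s < w s}"
  define t1 where "t1 = Inf bad"
  assume "\<not> ?thesis"
  hence t_bad: "t \<in> bad" using t by (simp add: bad_def B_def)
  have bdd: "bdd_below bad" unfolding bad_def by (rule bdd_belowI[of _ p]) auto
  have t1_le: "t1 \<le> s" if "s \<in> bad" for s unfolding t1_def using that bdd by (rule cInf_lower)
  have p_t1: "p \<le> t1" unfolding t1_def using t_bad by (intro cInf_greatest) (auto simp: bad_def)
  have B_pos: "B s > 0" for s unfolding B_def using w0 e by simp
  have w_t1: "w t1 \<le> B t1"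
  proof (cases "t1 = p")
    case False
    hence "p < t1" using p_t1 by simp
    moreover have "continuous_on {p..t1} w"
      using t1_le[OF t_bad] t by (intro continuous_on_subset[OF cont]) auto
    moreover have "continuous_on {p..t1} B" unfolding B_def by (intro continuous_intros)
    moreover have "w s \<le> B s" if "s \<in> {p..<t1}" for s
    proof -
      have "s \<notin> bad" using that t1_le by force
      thus ?thesis using that t1_le[OF t_bad] t by (auto simp: bad_def)
    qed
    ultimately show ?thesis by (rule continuous_on_le_at_right_end)
  qed (use e in \<open>simp add: B_def\<close>)
  hence t1_notin: "t1 \<notin> bad" unfolding bad_def by auto
  hence "t1 < q" using t1_le[OF t_bad] t t_bad by (cases "t1 = t") auto
  have "\<forall>\<^sub>F h in at_right 0. w (t1 + h) \<le> B t1 * exp ((\<epsilon> - c) * h)"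
    using D[of t1] p_t1 \<open>t1 < q\<close> B_pos w_t1 e by (intro Dini_exp_bound_right) auto
  moreover have "B t1 * exp ((\<epsilon> - c) * h) = B (t1 + h)" for h
    unfolding B_def by (simp add: algebra_simps flip: exp_add)
  ultimately obtain \<delta> where \<delta>: "\<delta> > 0" "\<And>h. 0 < h \<Longrightarrow> h < \<delta> \<Longrightarrow> w (t1 + h) \<le> B (t1 + h)"
    unfolding eventually_at_right_field by auto
  have "t1 + \<delta> \<le> t1" unfolding t1_def
  proof (rule cInf_greatest)
    fix s assume s: "s \<in> bad"
    have "t1 < s" using t1_le[OF s] t1_notin s by (cases "t1 = s") auto
    moreover have "\<not> w (t1 + (s - t1)) \<le> B (t1 + (s - t1))" using s by (simp add: bad_def)
    ultimately show "Inf bad + \<delta> \<le> s" using \<delta>(2)[of "s - t1"] unfolding t1_def by force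
  qed (use t_bad in blast)
  with \<delta>(1) show False by simp
qed

lemma Dini_exp_comparison:
  fixes w :: "real \<Rightarrow> real"
  assumes "continuous_on {p..q} w" "0 \<le> w p"
    and "\<And>t. t \<in> {p..<q} \<Longrightarrow>
           Limsup (at_right 0) (\<lambda>h. ereal ((w (t + h) - w t) / h)) \<le> ereal (- c * w t)"
    and "t \<in> {p..q}"
  shows "w t \<le> w p * exp (- c * (t - p))"
proof -
  have "((\<lambda>\<epsilon>. (w p + \<epsilon>) * exp ((\<epsilon> - c) * (t - p))) \<longlongrightarrow> (w p + 0) * exp ((0 - c) * (t - p)))
          (at_right 0)"
    by (intro tendsto_intros tendsto_mono[OF at_le]) auto
  moreover have "\<forall>\<^sub>F \<epsilon> in at_right 0. w t \<le> (w p + \<epsilon>) * exp ((\<epsilon> - c) * (t - p))"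
    using eventually_at_right_less[of 0]
    by eventually_elim (use assms in \<open>blast intro: Dini_exp_comparison_slack\<close>)
  ultimately show ?thesis by (auto intro: tendsto_lowerbound[OF _ _ trivial_limit_at_right_real])
qed

section \<open>The gain of an impulse\<close>

text \<open>Over a delay window ending at the impulse time \<open>t\<^sub>k\<close>, the comparison function
  \<open>e\<^sup>-\<^sup>\<sigma>\<^sup>N\<^sup>(\<^sup>t\<^sup>,\<^sup>t\<^sub>0\<^sup>) \<^sup>- \<^sup>c\<^sup>(\<^sup>t\<^sup>-\<^sup>t\<^sub>0\<^sup>)\<close> grows (backwards in time) at most by this factor: the
  window contains at most \<open>N(t\<^sub>k, t\<^sub>k - \<tau>) - 1\<close> impulses other than \<open>t\<^sub>k\<close>.\<close>
definition window_factor :: "(nat \<Rightarrow> real) \<Rightarrow> real \<Rightarrow> real \<Rightarrow> real \<Rightarrow> nat \<Rightarrow> real" where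
  "window_factor tk \<tau> \<sigma> c k = exp (max \<sigma> 0 * (Nimp tk (tk k) (tk k - \<tau>) - 1) + max c 0 * \<tau>)"

text \<open>Factor by which an impulse can increase \<open>V = V\<^sub>1 + V\<^sub>2\<close> relative to a bound that
  holds before the impulse and, enlarged by \<open>L\<close>, on the preceding delay window. For
  \<open>\<rho>\<^sub>1 < 1\<close> the part \<open>(1 - \<rho>\<^sub>1) V\<^sub>2\<close> of \<open>V\<^sub>2\<close> is estimated through condition (iv).\<close>
definition jump_gain :: "real \<Rightarrow> real \<Rightarrow> real \<Rightarrow> real \<Rightarrow> real" where
  "jump_gain \<rho>1 \<rho>2 \<kappa> L = (if 1 \<le> \<rho>1 then \<rho>1 + \<rho>2 * L else \<rho>1 + ((1 - \<rho>1) * \<kappa> + \<rho>2) * L)"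

lemma exponent_le_window_exponent:
  fixes d e N \<tau> \<sigma> c :: real
  assumes "0 \<le> d" "d \<le> N - 1" "0 \<le> e" "e \<le> \<tau>"
  shows "\<sigma> * d + c * e \<le> max \<sigma> 0 * (N - 1) + max c 0 * \<tau>"
proof -
  have "\<sigma> * d \<le> max \<sigma> 0 * (N - 1)"
    using assms by (intro order.trans[OF mult_right_mono mult_left_mono]) auto
  moreover have "c * e \<le> max c 0 * \<tau>"
    using assms by (intro order.trans[OF mult_right_mono mult_left_mono]) auto
  ultimately show ?thesis by simp
qed

lemma jump_gain_window_factor_le:
  fixes \<rho>1 \<rho>2 \<kappa> \<tau> c \<sigma> :: real and tk :: "nat \<Rightarrow> real"
  assumes \<rho>2: "\<rho>2 \<ge> 0"
    and cases: "(c > 0 \<and> \<rho>1 \<ge> 1 \<and> \<sigma> = - ln (\<rho>1 + \<rho>2 * exp (c * \<tau>))) \<or>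
         (c > 0 \<and> \<rho>1 < 1 \<and> \<rho>1 + ((1 - \<rho>1) * \<kappa> + \<rho>2) * exp (c * \<tau>) \<ge> 1 \<and>
            \<sigma> = - ln (\<rho>1 + ((1 - \<rho>1) * \<kappa> + \<rho>2) * exp (c * \<tau>))) \<or>
         (c > 0 \<and> \<rho>1 < 1 \<and> \<rho>1 + ((1 - \<rho>1) * \<kappa> + \<rho>2) * exp (c * \<tau>) < 1 \<and> \<sigma> > 0 \<and>
            (\<forall>k\<ge>1. \<rho>1 * exp \<sigma> + ((1 - \<rho>1) * \<kappa> + \<rho>2) * exp (c * \<tau>)
                     * exp (\<sigma> * Nimp tk (tk k) (tk k - \<tau>)) \<le> 1)) \<or>
         (c \<le> 0 \<and> \<rho>1 < 1 \<and> \<rho>1 + (1 - \<rho>1) * \<kappa> + \<rho>2 < 1 \<and> \<sigma> > 0 \<and>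
            (\<forall>k\<ge>1. \<rho>1 * exp \<sigma> + ((1 - \<rho>1) * \<kappa> + \<rho>2)
                     * exp (\<sigma> * Nimp tk (tk k) (tk k - \<tau>)) \<le> 1))"
    and k: "k \<ge> 1"
  shows "jump_gain \<rho>1 \<rho>2 \<kappa> (window_factor tk \<tau> \<sigma> c k) \<le> exp (- \<sigma>)"
proof -
  define N where "N = Nimp tk (tk k) (tk k - \<tau>)"
  define K where "K = (1 - \<rho>1) * \<kappa> + \<rho>2"
  have L: "window_factor tk \<tau> \<sigma> c k = exp (max \<sigma> 0 * (N - 1) + max c 0 * \<tau>)"
    unfolding window_factor_def N_def by simp
  from cases consider
      (1) "c > 0" "\<rho>1 \<ge> 1" "\<sigma> = - ln (\<rho>1 + \<rho>2 * exp (c * \<tau>))"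
    | (2) "c > 0" "\<rho>1 < 1" "\<rho>1 + K * exp (c * \<tau>) \<ge> 1" "\<sigma> = - ln (\<rho>1 + K * exp (c * \<tau>))"
    | (3) "c > 0" "\<rho>1 < 1" "\<sigma> > 0" "\<rho>1 * exp \<sigma> + K * exp (c * \<tau>) * exp (\<sigma> * N) \<le> 1"
    | (4) "c \<le> 0" "\<rho>1 < 1" "\<sigma> > 0" "\<rho>1 * exp \<sigma> + K * exp (\<sigma> * N) \<le> 1"
    unfolding K_def N_def using k by blast
  thus ?thesis
  proof cases
    case 1
    have b1: "1 \<le> \<rho>1 + \<rho>2 * exp (c * \<tau>)" using 1 \<rho>2 by (simp add: add_increasing2)
    hence "\<sigma> \<le> 0" using 1 by simp
    hence "window_factor tk \<tau> \<sigma> c k = exp (c * \<tau>)" unfolding L using 1 by (simp add: mult.commute)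
    moreover have "exp (- \<sigma>) = \<rho>1 + \<rho>2 * exp (c * \<tau>)" using 1 b1 by simp
    ultimately show ?thesis using 1 by (simp add: jump_gain_def)
  next
    case 2
    hence "\<sigma> \<le> 0" by simp
    hence "window_factor tk \<tau> \<sigma> c k = exp (c * \<tau>)" unfolding L using 2 by (simp add: mult.commute)
    moreover have "exp (- \<sigma>) = \<rho>1 + K * exp (c * \<tau>)" using 2 by simp
    ultimately show ?thesis using 2 unfolding K_def by (simp add: jump_gain_def)
  next
    case 3
    have "window_factor tk \<tau> \<sigma> c k = exp (c * \<tau>) * exp (\<sigma> * N) * exp (- \<sigma>)"
      unfolding L using 3 by (simp add: algebra_simps flip: exp_add)
    hence "\<rho>1 + K * window_factor tk \<tau> \<sigma> c k = (\<rho>1 * exp \<sigma> + K * exp (c * \<tau>) * exp (\<sigma> * N)) * exp (- \<sigma>)"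
      by (simp add: algebra_simps exp_minus field_simps)
    also have "\<dots> \<le> exp (- \<sigma>)" using 3 by (simp add: mult_left_le_one_le)
    finally show ?thesis using 3 unfolding K_def by (simp add: jump_gain_def)
  next
    case 4
    have "window_factor tk \<tau> \<sigma> c k = exp (\<sigma> * N) * exp (- \<sigma>)"
      unfolding L using 4 by (simp add: algebra_simps flip: exp_add)
    hence "\<rho>1 + K * window_factor tk \<tau> \<sigma> c k = (\<rho>1 * exp \<sigma> + K * exp (\<sigma> * N)) * exp (- \<sigma>)"
      by (simp add: algebra_simps exp_minus field_simps)
    also have "\<dots> \<le> exp (- \<sigma>)" using 4 by (simp add: mult_left_le_one_le)
    finally show ?thesis using 4 unfolding K_def by (simp add: jump_gain_def)
  qed
qed

lemma jump_gain_bound: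
  fixes V1m V2m V1p E L :: real
  assumes "0 \<le> \<rho>1" "0 \<le> \<rho>2" "0 \<le> V2m" "V1m + V2m \<le> E" "V2m \<le> \<kappa> * (L * E)"
    and "V1p \<le> \<rho>1 * V1m + \<rho>2 * (L * E)"
  shows "V1p + V2m \<le> jump_gain \<rho>1 \<rho>2 \<kappa> L * E"
proof (cases "1 \<le> \<rho>1")
  case True
  have "V1p + V2m \<le> \<rho>1 * (V1m + V2m) + \<rho>2 * (L * E)"
    using assms(3,6) mult_right_mono[OF True assms(3)] by (simp add: algebra_simps)
  also have "\<dots> \<le> \<rho>1 * E + \<rho>2 * (L * E)" using assms(1,4) by (simp add: mult_left_mono)
  finally show ?thesis using True by (simp add: jump_gain_def algebra_simps)
next
  case False
  have "V1p + V2m \<le> \<rho>1 * (V1m + V2m) + (1 - \<rho>1) * V2m + \<rho>2 * (L * E)"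
    using assms(6) by (simp add: algebra_simps)
  also have "\<dots> \<le> \<rho>1 * E + (1 - \<rho>1) * (\<kappa> * (L * E)) + \<rho>2 * (L * E)"
  proof -
    have "\<rho>1 * (V1m + V2m) \<le> \<rho>1 * E" using assms(1,4) by (rule mult_left_mono[rotated])
    moreover have "(1 - \<rho>1) * V2m \<le> (1 - \<rho>1) * (\<kappa> * (L * E))"
      using False assms(5) by (intro mult_left_mono) auto
    ultimately show ?thesis by linarith
  qed
  finally show ?thesis using False by (simp add: jump_gain_def algebra_simps)
qed

section \<open>A solution of the impulsive delay system\<close>

locale impulsive_solution =
  fixes f g :: "real \<Rightarrow> (real \<Rightarrow> 'a::real_normed_vector) \<Rightarrow> 'a"
    and \<tau> t0 :: real and tk :: "nat \<Rightarrow> real"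
    and V1 :: "real \<Rightarrow> 'a \<Rightarrow> real"
    and V2 :: "real \<Rightarrow> (real \<Rightarrow> 'a) \<Rightarrow> real"
    and \<alpha>1 \<alpha>2 \<alpha>3 :: "real \<Rightarrow> real"
    and c \<rho>1 \<rho>2 \<kappa> \<sigma> lam \<mu> :: real
    and \<phi> :: "real \<Rightarrow> 'a" and T :: ereal and x :: "real \<Rightarrow> 'a"
  assumes tau_pos: "\<tau> > 0"
    and tk0: "tk 0 = t0" and t0_nonneg: "t0 \<ge> 0"
    and tk_mono: "strict_mono tk" and tk_lim: "filterlim tk at_top sequentially"
    and V1_cls: "class_V0 V1" and V2_cls: "class_V0star \<tau> V2"
    and K1: "class_Kinf \<alpha>1" and K2: "class_Kinf \<alpha>2" and K3: "class_Kinf \<alpha>3"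
    and params: "\<rho>1 \<ge> 0" "\<rho>2 \<ge> 0" "\<kappa> > 0" "lam > 0" "\<mu> \<ge> 0"
    and cond_i: "\<forall>t\<ge>0. \<forall>\<psi>\<in>PC \<tau>.
        \<alpha>1 (norm (\<psi> 0)) \<le> V1 t (\<psi> 0) \<and> V1 t (\<psi> 0) \<le> \<alpha>2 (norm (\<psi> 0)) \<and>
        0 \<le> V2 t \<psi> \<and> V2 t \<psi> \<le> \<alpha>3 (normtau \<tau> \<psi>)"
    and cond_ii: "\<forall>t\<ge>0. \<forall>\<psi>\<in>PC \<tau>. \<forall>T x. is_sol f g \<tau> tk t \<psi> T x \<longrightarrow>
        Limsup (at_right 0) (\<lambda>h. ereal
           (((V1 (t + h) (x (t + h)) + V2 (t + h) (seg \<tau> x (t + h)))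
             - (V1 t (\<psi> 0) + V2 t \<psi>)) / h))
        \<le> ereal (- c * (V1 t (\<psi> 0) + V2 t \<psi>))"
    and cond_iii: "\<forall>t\<ge>0. \<forall>\<psi>\<in>PC \<tau>.
        V1 t (\<psi> 0 + g t \<psi>) \<le> \<rho>1 * V1left V1 t (\<psi> 0)
          + \<rho>2 * (SUP s\<in>{-\<tau>..0}. V1left V1 (t + s) (\<psi> s))"
    and cond_iv: "\<forall>t\<ge>0. \<forall>\<psi>\<in>PC \<tau>.
        V2 t \<psi> \<le> \<kappa> * (SUP s\<in>{-\<tau>..0}. V1ext V1 (t + s) (\<psi> s))"
    and jump_condition: "\<forall>k\<ge>1. jump_gain \<rho>1 \<rho>2 \<kappa> (window_factor tk \<tau> \<sigma> c k) \<le> exp (- \<sigma>)"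
    and dwell_condition: "\<forall>t s. t0 \<le> s \<and> s < t \<longrightarrow> - \<sigma> * Nimp tk t s - (c - lam) * (t - s) \<le> \<mu>"
    and phi: "\<phi> \<in> PC \<tau>" and sol: "is_sol f g \<tau> tk t0 \<phi> T x"
begin

lemma sol_pwrc_on: "t0 - \<tau> \<le> b \<Longrightarrow> ereal b < T \<Longrightarrow> pwrc_on (t0 - \<tau>) b x"
  using sol unfolding is_sol_def by auto

lemma x_initial: "r \<in> {-\<tau>..0} \<Longrightarrow> x (t0 + r) = \<phi> r"
  using sol unfolding is_sol_def seg_def by (auto dest!: fun_cong[of _ _ r] split: if_splits)

lemma seg_sol_in_PC: "t0 \<le> t \<Longrightarrow> ereal t < T \<Longrightarrow> seg \<tau> x t \<in> PC \<tau>"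
  using tau_pos by (intro seg_in_PC pwrc_on_subinterval[OF sol_pwrc_on[of t]]) auto

lemma segm_sol_in_PC: "t0 \<le> t \<Longrightarrow> ereal t < T \<Longrightarrow> segm \<tau> x t \<in> PC \<tau>"
  using tau_pos by (intro segm_in_PC pwrc_on_subinterval[OF sol_pwrc_on[of t]]) auto

lemma is_sol_restart: "t0 \<le> t \<Longrightarrow> ereal t < T \<Longrightarrow> is_sol f g \<tau> tk t (seg \<tau> x t) T x"
proof -
  assume t: "t0 \<le> t" "ereal t < T"
  have "pwrc_on (t - \<tau>) b x" if "t - \<tau> \<le> b" "ereal b < T" for b
    using that t by (intro pwrc_on_subinterval[OF sol_pwrc_on[of b]]) auto
  thus ?thesis using sol t unfolding is_sol_def by auto
qed

lemma seg_at_0: "seg \<tau> y t 0 = y t"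
  using tau_pos by (simp add: seg_def)

lemma V1_nonneg: "t \<ge> 0 \<Longrightarrow> V1 t y \<ge> 0"
  using V1_cls unfolding class_V0_def by auto

lemma V1_le_alpha2: "0 \<le> t \<Longrightarrow> V1 t y \<le> \<alpha>2 (norm y)"
proof -
  assume t: "0 \<le> t"
  have "pwrc_on (0 - \<tau>) 0 (\<lambda>_::real. y)" by (rule continuous_imp_pwrc_on) simp
  hence "seg \<tau> (\<lambda>_. y) 0 \<in> PC \<tau>" by (rule seg_in_PC)
  thus ?thesis using cond_i t seg_at_0[of "\<lambda>_. y" 0] by metis
qed

definition V_sol :: "real \<Rightarrow> real" where
  "V_sol t = V1 t (x t) + V2 t (seg \<tau> x t)"

lemma V_sol_Dini: "t0 \<le> t \<Longrightarrow> ereal t < T \<Longrightarrow>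
   Limsup (at_right 0) (\<lambda>h. ereal ((V_sol (t + h) - V_sol t) / h)) \<le> ereal (- c * V_sol t)"
  using cond_ii[rule_format, OF _ seg_sol_in_PC is_sol_restart] t0_nonneg
  unfolding V_sol_def seg_at_0 by simp

lemma V2_sol_nonneg: "t0 \<le> t \<Longrightarrow> ereal t < T \<Longrightarrow> V2 t (seg \<tau> x t) \<ge> 0"
  using cond_i seg_sol_in_PC t0_nonneg by auto

lemma alpha1_le_V1_sol: "t0 \<le> t \<Longrightarrow> ereal t < T \<Longrightarrow> \<alpha>1 (norm (x t)) \<le> V1 t (x t)"
  using cond_i seg_sol_in_PC t0_nonneg seg_at_0[of x t] by (metis order_trans)

lemma V1_le_V_sol: "t0 \<le> t \<Longrightarrow> ereal t < T \<Longrightarrow> V1 t (x t) \<le> V_sol t"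
  using V2_sol_nonneg unfolding V_sol_def by auto

lemma V_sol_nonneg: "t0 \<le> t \<Longrightarrow> ereal t < T \<Longrightarrow> V_sol t \<ge> 0"
  using V1_le_V_sol V1_nonneg t0_nonneg by (meson order_trans)

lemma tk_le_iff: "tk i \<le> tk j \<longleftrightarrow> i \<le> j"
  using tk_mono by (rule strict_mono_less_eq)

lemma tk_less_iff: "tk i < tk j \<longleftrightarrow> i < j"
  using tk_mono by (rule strict_mono_less)

lemma t0_le_tk: "t0 \<le> tk j"
  using tk_le_iff[of 0 j] tk0 by simp

lemma t0_less_tk_Suc: "t0 < tk (Suc j)"
  using tk_less_iff[of 0 "Suc j"] tk0 by simp

lemma impulse_interval_exists: "t0 \<le> u \<Longrightarrow> \<exists>j. tk j \<le> u \<and> u < tk (Suc j)"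
proof -
  assume u: "t0 \<le> u"
  have "\<exists>n. u < tk n"
    using tk_lim by (simp add: filterlim_at_top_dense eventually_sequentially) (meson order_refl)
  define m where "m = (LEAST n. u < tk n)"
  have m: "u < tk m" unfolding m_def using \<open>\<exists>n. u < tk n\<close> by (rule LeastI_ex)
  then obtain j where j: "m = Suc j" using u tk0 by (cases m) auto
  have "\<not> u < tk j" using not_less_Least[of j "\<lambda>n. u < tk n"] j unfolding m_def by simp
  thus ?thesis using m j by (intro exI[of _ j]) auto
qed

lemma not_impulse_between: "tk j < t \<Longrightarrow> t < tk (Suc j) \<Longrightarrow> t \<notin> range tk"
  by (auto simp: tk_less_iff)

lemma Nimp_t0: "tk j \<le> u \<Longrightarrow> u < tk (Suc j) \<Longrightarrow> Nimp tk u t0 = real j"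
proof -
  assume u: "tk j \<le> u" "u < tk (Suc j)"
  have "{i. t0 < tk i \<and> tk i \<le> u} = {1..j}"
  proof (intro set_eqI iffI)
    fix i assume "i \<in> {i. t0 < tk i \<and> tk i \<le> u}"
    hence "tk 0 < tk i" "tk i < tk (Suc j)" using u tk0 by auto
    thus "i \<in> {1..j}" unfolding tk_less_iff by auto
  next
    fix i assume "i \<in> {1..j}"
    hence "tk 0 < tk i" "tk i \<le> tk j" unfolding tk_less_iff tk_le_iff by auto
    thus "i \<in> {i. t0 < tk i \<and> tk i \<le> u}" using u tk0 by auto
  qed
  thus ?thesis unfolding Nimp_def by simp
qed

lemma window_impulse_count:
  assumes "i \<le> j" "tk (Suc j) - \<tau> < tk (Suc i)"
  shows "real (j - i) \<le> Nimp tk (tk (Suc j)) (tk (Suc j) - \<tau>) - 1"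
proof -
  let ?S = "{k. tk (Suc j) - \<tau> < tk k \<and> tk k \<le> tk (Suc j)}"
  have "{Suc i..Suc j} \<subseteq> ?S"
    using assms by (auto simp: less_le_trans[OF _ iffD2[OF tk_le_iff]] iffD2[OF tk_le_iff])
  moreover have "finite ?S" by (rule finite_subset[of _ "{..Suc j}"]) (auto simp: tk_le_iff)
  ultimately have "card {Suc i..Suc j} \<le> card ?S" by (rule card_mono[rotated])
  thus ?thesis unfolding Nimp_def using assms(1) by simp
qed

lemma window_factor_ge_1: "1 \<le> window_factor tk \<tau> \<sigma> c (Suc j)"
  using window_impulse_count[of j j] tau_pos unfolding window_factor_def by simp

lemma continuous_on_V1_comp:
  assumes "0 \<le> p" "continuous_on {p..q} y"
  shows "continuous_on {p..q} (\<lambda>t. V1 t (y t))"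
proof (cases "p \<le> q")
  case True
  define z where "z t = y (max p (min t q))" for t
  have cz: "continuous_on UNIV z" unfolding z_def
    by (rule continuous_on_compose2[OF assms(2)]) (use True in \<open>auto intro!: continuous_intros\<close>)
  hence "\<forall>b\<ge>0. pwrc_on 0 b z" by (simp add: continuous_imp_pwrc_on)
  hence "\<forall>t\<ge>0. continuous (at t within {0..}) z \<longrightarrow> continuous (at t within {0..}) (\<lambda>t. V1 t (z t))"
    using V1_cls unfolding class_V0_def by blast
  moreover have "continuous (at t within {0..}) z" for t
    using cz by (meson UNIV_I continuous_on_eq_continuous_within continuous_within_subset subset_UNIV)
  ultimately have "continuous_on {0..} (\<lambda>t. V1 t (z t))"
    by (simp add: continuous_on_eq_continuous_within)
  hence "continuous_on {p..q} (\<lambda>t. V1 t (z t))" by (rule continuous_on_subset) (use assms in auto)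
  thus ?thesis by (rule continuous_on_cong[THEN iffD1, rotated 2]) (auto simp: z_def)
qed simp

lemma V1left_eq_V1ext: "V1left V1 r y = V1ext V1 r y"
proof -
  have "\<forall>b\<ge>0. pwrc_on 0 b (\<lambda>_::real. y)" by (simp add: continuous_imp_pwrc_on)
  hence "\<forall>t\<ge>0. continuous (at t within {0..}) (\<lambda>_::real. y) \<longrightarrow>
           continuous (at t within {0..}) (\<lambda>t. V1 t y)"
    using V1_cls unfolding class_V0_def by blast
  hence "continuous_on {0..} (\<lambda>t. V1 t y)" by (simp add: continuous_on_eq_continuous_within)
  hence "continuous_on UNIV (\<lambda>u. V1 (max u 0) y)"
    by (rule continuous_on_compose2) (auto intro!: continuous_intros)
  hence "isCont (\<lambda>u. V1ext V1 u y) r" unfolding V1ext_def by (simp add: continuous_on_eq_continuous_at)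
  hence "((\<lambda>u. V1ext V1 u y) \<longlongrightarrow> V1ext V1 r y) (at_left r)"
    unfolding isCont_def by (rule tendsto_mono[rotated]) (rule at_le, simp)
  thus ?thesis unfolding V1left_def by (intro tendsto_Lim) auto
qed

lemma isCont_sol: "t0 < t \<Longrightarrow> ereal t < T \<Longrightarrow> t \<notin> range tk \<Longrightarrow> isCont x t"
  using sol unfolding is_sol_def by blast

lemma sol_continuous_within:
  assumes "tk j \<le> p" "p \<le> t" "t \<le> q" "t < tk (Suc j)" "p < q" "ereal q < T"
  shows "continuous (at t within {p..q}) x"
proof (cases "t = p")
  case True
  have "continuous (at_right p) x"
    using sol_pwrc_on[of q] assms t0_le_tk[of j] tau_pos unfolding pwrc_on_def by auto
  thus ?thesis using True at_within_Icc_at_right[OF assms(5)] by simp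
next
  case False
  hence "tk j < t" using assms by auto
  moreover have "ereal t < T" using assms by (meson ereal_less_eq(3) order.strict_trans1)
  ultimately have "isCont x t"
    using not_impulse_between[of j t] assms t0_le_tk[of j] by (intro isCont_sol) auto
  thus ?thesis by (rule continuous_at_imp_continuous_within)
qed

lemma continuous_on_sol:
  assumes "tk j \<le> p" "q < tk (Suc j)" "ereal q < T"
  shows "continuous_on {p..q} x"
proof (cases "p < q")
  case True
  thus ?thesis using sol_continuous_within[of j p _ q] assms
    by (auto simp: continuous_on_eq_continuous_within)
next
  case False
  hence "{p..q} \<subseteq> {p}" by auto
  thus ?thesis by (rule continuous_on_subset[OF continuous_on_sing])
qed

lemma continuous_on_sol_left_limit:
  assumes "tk j \<le> p" "p < tk (Suc j)" "ereal (tk (Suc j)) < T"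
  shows "continuous_on {p..tk (Suc j)}
           (\<lambda>t. if t < tk (Suc j) then x t else Lim (at_left (tk (Suc j))) x)"
    (is "continuous_on {p..?s} ?x'")
proof -
  have "continuous (at t within {p..?s}) ?x'" if t: "t \<in> {p..?s}" for t
  proof (cases "t < ?s")
    case True
    have c: "continuous (at t within {p..?s}) x"
      using sol_continuous_within[of j p t ?s] assms t True by auto
    have "eventually (\<lambda>y. y \<in> {..<?s}) (nhds t)" using True by (intro eventually_nhds_in_open) auto
    hence "eventually (\<lambda>y. x y = ?x' y) (at t within {p..?s})"
      unfolding eventually_at_filter by (auto elim!: eventually_mono)
    hence "(?x' \<longlongrightarrow> x t) (at t within {p..?s})"
      using c unfolding continuous_within by (rule Lim_transform_eventually[rotated])
    thus ?thesis using True by (simp add: continuous_within)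
  next
    case False
    hence ts: "t = ?s" using t by auto
    have "\<exists>l. (x \<longlongrightarrow> l) (at_left ?s)"
      using sol_pwrc_on[of ?s] assms tau_pos t0_le_tk[of "Suc j"] unfolding pwrc_on_def by auto
    hence "(x \<longlongrightarrow> Lim (at_left ?s) x) (at_left ?s)"
      by (metis tendsto_Lim trivial_limit_at_left_real)
    moreover have "eventually (\<lambda>y. x y = ?x' y) (at_left ?s)"
      by (auto simp: eventually_at_filter)
    ultimately have "(?x' \<longlongrightarrow> Lim (at_left ?s) x) (at_left ?s)" by (rule Lim_transform_eventually)
    thus ?thesis using ts at_within_Icc_at_left[OF assms(2)] by (simp add: continuous_within)
  qed
  thus ?thesis by (simp add: continuous_on_eq_continuous_within)
qed

text \<open>\<open>class_V0star\<close> only gives continuity of \<open>V\<^sub>2\<close> along functions that are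
  piecewise right-continuous on every \<open>[-\<tau>, b]\<close>, so the solution, known on \<open>[t\<^sub>0 - \<tau>, b)\<close>,
  is extended by a constant \<open>L\<close> from \<open>b\<close> on.\<close>
definition sol_extension :: "real \<Rightarrow> 'a \<Rightarrow> real \<Rightarrow> 'a" where
  "sol_extension b L = extend_pc (t0 - \<tau>) b x L"

lemma continuous_on_V2_sol_extension:
  assumes "t0 \<le> b" "ereal b < T"
  shows "continuous_on {0..} (\<lambda>t. V2 t (seg \<tau> (sol_extension b L) t))"
proof -
  have "pwrc_on (t0 - \<tau>) b x" using assms tau_pos by (intro sol_pwrc_on) auto
  hence "\<forall>b'\<ge>-\<tau>. pwrc_on (-\<tau>) b' (sol_extension b L)"
    unfolding sol_extension_def using assms tau_pos by (auto intro!: pwrc_on_extend_pc)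
  thus ?thesis using V2_cls unfolding class_V0star_def by blast
qed

lemma seg_sol_extension:
  "t0 \<le> t \<Longrightarrow> t < b \<Longrightarrow> seg \<tau> (sol_extension b L) t = seg \<tau> x t"
  "t0 \<le> b \<Longrightarrow> seg \<tau> (sol_extension b (x b)) b = seg \<tau> x b"
  "t0 \<le> b \<Longrightarrow> seg \<tau> (sol_extension b (Lim (at_left b) x)) b = segm \<tau> x b"
  using tau_pos by (auto simp: seg_def segm_def sol_extension_def extend_pc_def fun_eq_iff)

lemma V2_sol_tendsto_at_left:
  assumes "ereal (tk (Suc j)) < T"
  shows "((\<lambda>t. V2 t (seg \<tau> x t)) \<longlongrightarrow> V2 (tk (Suc j)) (seg \<tau> (sol_extension (tk (Suc j)) L) (tk (Suc j))))
           (at_left (tk (Suc j)))"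
proof -
  let ?s = "tk (Suc j)"
  have ps: "tk j < ?s" using tk_less_iff by simp
  have "continuous_on {tk j..?s} (\<lambda>t. V2 t (seg \<tau> (sol_extension ?s L) t))"
    using continuous_on_V2_sol_extension[of ?s L] assms t0_le_tk[of j] t0_le_tk[of "Suc j"] t0_nonneg
    by (auto intro: continuous_on_subset[of "{0..}"])
  from tendsto_at_left_of_continuous_on[OF this ps] show ?thesis
    by (rule Lim_transform_eventually)
      (use eventually_at_left_real[OF ps] t0_le_tk[of j] seg_sol_extension(1) in \<open>auto elim!: eventually_mono\<close>)
qed

text \<open>Both values are the left limit of \<open>t \<mapsto> V\<^sub>2(t, x\<^sub>t)\<close>: the solution extended by
  \<open>x(t\<^sub>k)\<close> and by \<open>x(t\<^sub>k\<^sup>-)\<close> agrees with \<open>x\<close> before \<open>t\<^sub>k\<close>.\<close>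
lemma V2_sol_no_jump:
  assumes "ereal (tk (Suc j)) < T"
  shows "V2 (tk (Suc j)) (seg \<tau> x (tk (Suc j))) = V2 (tk (Suc j)) (segm \<tau> x (tk (Suc j)))"
  using tendsto_unique[OF trivial_limit_at_left_real V2_sol_tendsto_at_left[OF assms, of "x (tk (Suc j))"]
      V2_sol_tendsto_at_left[OF assms, of "Lim (at_left (tk (Suc j))) x"]]
    seg_sol_extension(2,3)[OF t0_le_tk] by simp

lemma V_sol_tendsto_at_left:
  assumes "ereal (tk (Suc j)) < T"
  shows "(V_sol \<longlongrightarrow> V1 (tk (Suc j)) (Lim (at_left (tk (Suc j))) x) + V2 (tk (Suc j)) (segm \<tau> x (tk (Suc j))))
          (at_left (tk (Suc j)))"
proof -
  let ?s = "tk (Suc j)" and ?L = "Lim (at_left (tk (Suc j))) x"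
  have ps: "tk j < ?s" using tk_less_iff by simp
  have "continuous_on {tk j..?s} (\<lambda>t. V1 t (if t < ?s then x t else ?L))"
    using continuous_on_V1_comp[OF _ continuous_on_sol_left_limit[OF order_refl ps assms]]
      t0_le_tk[of j] t0_nonneg by simp
  from tendsto_at_left_of_continuous_on[OF this ps]
  have "((\<lambda>t. V1 t (if t < ?s then x t else ?L)) \<longlongrightarrow> V1 ?s ?L) (at_left ?s)" by simp
  hence "((\<lambda>t. V1 t (x t)) \<longlongrightarrow> V1 ?s ?L) (at_left ?s)"
    by (rule Lim_transform_eventually) (use eventually_at_left_real[OF ps] in \<open>auto elim!: eventually_mono\<close>)
  thus ?thesis unfolding V_sol_def[abs_def]
    using V2_sol_tendsto_at_left[OF assms, of ?L] seg_sol_extension(3)[OF t0_le_tk] by (auto intro: tendsto_add)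
qed

lemma continuous_on_V_sol:
  assumes "tk j \<le> p" "q < tk (Suc j)" "ereal q < T"
  shows "continuous_on {p..q} V_sol"
proof -
  have p0: "t0 \<le> p" using assms t0_le_tk[of j] by simp
  have "continuous_on {p..q} (\<lambda>t. V1 t (x t))"
    using continuous_on_V1_comp[OF _ continuous_on_sol[OF assms]] p0 t0_nonneg by simp
  moreover have "continuous_on {p..q} (\<lambda>t. V2 t (seg \<tau> x t))"
  proof (cases "p \<le> q")
    case True
    have "continuous_on {p..q} (\<lambda>t. V2 t (seg \<tau> (sol_extension q (x q)) t))"
      using continuous_on_V2_sol_extension[of q "x q"] assms p0 True t0_nonneg
      by (auto intro: continuous_on_subset)
    moreover have "seg \<tau> (sol_extension q (x q)) t = seg \<tau> x t" if "t \<in> {p..q}" for t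
      using that p0 seg_sol_extension(1,2) by (cases "t < q") auto
    ultimately show ?thesis by (metis (no_types, lifting) continuous_on_cong)
  qed simp
  ultimately show ?thesis unfolding V_sol_def[abs_def] by (intro continuous_on_add)
qed

lemma V_sol_between_impulses:
  assumes "tk j \<le> p" "p \<le> u" "u < tk (Suc j)" "ereal u < T"
  shows "V_sol u \<le> V_sol p * exp (- c * (u - p))"
proof (rule Dini_exp_comparison[OF continuous_on_V_sol[OF assms(1,3,4)]])
  have "t0 \<le> p" using assms t0_le_tk[of j] by simp
  moreover have lt: "ereal t < T" if "t \<le> u" for t
    using that assms(4) by (meson ereal_less_eq(3) order.strict_trans1)
  ultimately show "0 \<le> V_sol p" "\<And>t. t \<in> {p..<u} \<Longrightarrow>
      Limsup (at_right 0) (\<lambda>h. ereal ((V_sol (t + h) - V_sol t) / h)) \<le> ereal (- c * V_sol t)"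
    using assms V_sol_nonneg V_sol_Dini by auto
qed (use assms in auto)

subsection \<open>Estimate by induction over the impulses\<close>

definition initial_bound :: real where
  "initial_bound = \<alpha>2 (normtau \<tau> \<phi>) + \<alpha>3 (normtau \<tau> \<phi>)"

lemma initial_bound_nonneg: "0 \<le> initial_bound"
  using class_Kinf_nonneg[OF K2] class_Kinf_nonneg[OF K3] normtau_nonneg[OF phi] tau_pos
  unfolding initial_bound_def by (simp add: less_imp_le)

lemma V1ext_initial_le: "t0 - \<tau> \<le> v \<Longrightarrow> v \<le> t0 \<Longrightarrow> V1ext V1 v (x v) \<le> initial_bound"
proof -
  assume v: "t0 - \<tau> \<le> v" "v \<le> t0"
  have "x v = \<phi> (v - t0)" using x_initial[of "v - t0"] v by simp
  hence "V1ext V1 v (x v) \<le> \<alpha>2 (norm (\<phi> (v - t0)))" unfolding V1ext_def by (simp add: V1_le_alpha2)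
  also have "\<dots> \<le> \<alpha>2 (normtau \<tau> \<phi>)" using v by (intro class_Kinf_mono[OF K2] normtau_ge[OF phi]) auto
  also have "\<dots> \<le> initial_bound"
    unfolding initial_bound_def using class_Kinf_nonneg[OF K3] normtau_nonneg[OF phi] tau_pos by simp
  finally show ?thesis .
qed

lemma V_sol_t0_le: "V_sol t0 \<le> initial_bound"
proof -
  have "seg \<tau> x t0 = \<phi>" using sol unfolding is_sol_def by simp
  hence "V_sol t0 = V1 t0 (\<phi> 0) + V2 t0 \<phi>" unfolding V_sol_def using seg_at_0[of x t0] by simp
  also have "\<dots> \<le> \<alpha>2 (norm (\<phi> 0)) + \<alpha>3 (normtau \<tau> \<phi>)"
    using cond_i phi t0_nonneg by (meson add_mono)
  also have "\<dots> \<le> initial_bound" unfolding initial_bound_def using tau_pos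
    by (intro add_mono class_Kinf_mono[OF K2] normtau_ge[OF phi]) auto
  finally show ?thesis .
qed

definition envelope :: "nat \<Rightarrow> real \<Rightarrow> real" where
  "envelope j u = initial_bound * exp (- \<sigma> * j - c * (u - t0))"

definition envelope_holds :: "nat \<Rightarrow> bool" where
  "envelope_holds j \<longleftrightarrow> (\<forall>u. tk j \<le> u \<and> u < tk (Suc j) \<and> ereal u < T \<longrightarrow> V_sol u \<le> envelope j u)"

lemma envelope_nonneg: "0 \<le> envelope j u"
  unfolding envelope_def using initial_bound_nonneg by simp

lemma envelope_holds_0: "envelope_holds 0"
  unfolding envelope_holds_def
proof (intro allI impI)
  fix u assume u: "tk 0 \<le> u \<and> u < tk (Suc 0) \<and> ereal u < T"
  have "V_sol u \<le> V_sol t0 * exp (- c * (u - t0))"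
    using V_sol_between_impulses[of 0 t0 u] u tk0 by auto
  also have "\<dots> \<le> envelope 0 u" using V_sol_t0_le unfolding envelope_def by simp
  finally show "V_sol u \<le> envelope 0 u" .
qed

lemma envelope_le_window_factor:
  assumes "i \<le> j" "tk (Suc j) - \<tau> < tk (Suc i)" "tk (Suc j) - \<tau> \<le> v" "v \<le> tk (Suc j)"
  shows "envelope i v \<le> window_factor tk \<tau> \<sigma> c (Suc j) * envelope j (tk (Suc j))"
proof -
  let ?s = "tk (Suc j)"
  have "\<sigma> * real (j - i) + c * (?s - v) \<le> max \<sigma> 0 * (Nimp tk ?s (?s - \<tau>) - 1) + max c 0 * \<tau>"
    using window_impulse_count[OF assms(1,2)] assms(3,4) by (intro exponent_le_window_exponent) auto
  hence "- \<sigma> * i - c * (v - t0) \<le>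
         (max \<sigma> 0 * (Nimp tk ?s (?s - \<tau>) - 1) + max c 0 * \<tau>) + (- \<sigma> * j - c * (?s - t0))"
    using assms(1) by (simp add: of_nat_diff algebra_simps)
  hence "exp (- \<sigma> * i - c * (v - t0)) \<le>
         window_factor tk \<tau> \<sigma> c (Suc j) * exp (- \<sigma> * j - c * (?s - t0))"
    unfolding window_factor_def by (simp flip: exp_add)
  from mult_left_mono[OF this initial_bound_nonneg] show ?thesis
    unfolding envelope_def by (simp add: ac_simps)
qed

lemma V1ext_window_le:
  assumes IH: "\<And>i. i \<le> j \<Longrightarrow> envelope_holds i" and sT: "ereal (tk (Suc j)) < T"
    and v: "tk (Suc j) - \<tau> \<le> v" "v < tk (Suc j)"
  shows "V1ext V1 v (x v) \<le> window_factor tk \<tau> \<sigma> c (Suc j) * envelope j (tk (Suc j))"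
proof (cases "t0 \<le> v")
  case True
  obtain i where i: "tk i \<le> v" "v < tk (Suc i)" using impulse_interval_exists[OF True] by blast
  have ij: "i \<le> j" using i(1) v(2) tk_less_iff[of i "Suc j"] by simp
  have vT: "ereal v < T" using v sT by (meson ereal_less_eq(3) less_imp_le order.strict_trans1)
  have "V1ext V1 v (x v) = V1 v (x v)" unfolding V1ext_def using True t0_nonneg by simp
  also have "\<dots> \<le> V_sol v" using V1_le_V_sol True vT .
  also have "\<dots> \<le> envelope i v" using IH[OF ij] i vT unfolding envelope_holds_def by blast
  also have "\<dots> \<le> window_factor tk \<tau> \<sigma> c (Suc j) * envelope j (tk (Suc j))"
    using ij i v by (intro envelope_le_window_factor) auto
  finally show ?thesis .
next
  case False
  have "V1ext V1 v (x v) \<le> initial_bound"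
    using V1ext_initial_le v False t0_le_tk[of "Suc j"] by simp
  also have "initial_bound = envelope 0 t0" unfolding envelope_def by simp
  also have "\<dots> \<le> window_factor tk \<tau> \<sigma> c (Suc j) * envelope j (tk (Suc j))"
    using v False t0_less_tk_Suc[of 0] t0_le_tk[of "Suc j"] by (intro envelope_le_window_factor) auto
  finally show ?thesis .
qed

lemma left_limit_le_envelope:
  assumes "envelope_holds j" "ereal (tk (Suc j)) < T"
  shows "V1 (tk (Suc j)) (Lim (at_left (tk (Suc j))) x) + V2 (tk (Suc j)) (segm \<tau> x (tk (Suc j)))
           \<le> envelope j (tk (Suc j))"
proof (rule tendsto_le[OF trivial_limit_at_left_real _ V_sol_tendsto_at_left[OF assms(2)]])
  let ?s = "tk (Suc j)"
  have "isCont (envelope j) ?s" unfolding envelope_def[abs_def] by (intro continuous_intros)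
  thus "(envelope j \<longlongrightarrow> envelope j ?s) (at_left ?s)"
    unfolding isCont_def by (rule tendsto_mono[rotated]) (rule at_le, simp)
  have "tk j < ?s" using tk_less_iff by simp
  from eventually_at_left_real[OF this] show "\<forall>\<^sub>F t in at_left ?s. V_sol t \<le> envelope j t"
  proof eventually_elim
    case (elim t)
    hence "ereal t < T" using assms(2) by (meson ereal_less_eq(3) greaterThanLessThan_iff less_imp_le order.strict_trans1)
    thus ?case using assms(1) elim unfolding envelope_holds_def by auto
  qed
qed

lemma V1ext_segm_le:
  assumes IH: "\<And>i. i \<le> j \<Longrightarrow> envelope_holds i" and sT: "ereal (tk (Suc j)) < T"
    and r: "r \<in> {-\<tau>..0}"
  shows "V1ext V1 (tk (Suc j) + r) (segm \<tau> x (tk (Suc j)) r)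
           \<le> window_factor tk \<tau> \<sigma> c (Suc j) * envelope j (tk (Suc j))"
proof (cases "r = 0")
  case True
  let ?s = "tk (Suc j)"
  have s0: "t0 \<le> ?s" "0 \<le> ?s" using t0_le_tk t0_nonneg by (auto intro: order_trans)
  have "V1ext V1 (?s + r) (segm \<tau> x ?s r) = V1 ?s (Lim (at_left ?s) x)"
    using True s0 unfolding V1ext_def segm_def by simp
  also have "\<dots> \<le> envelope j ?s"
    using left_limit_le_envelope[OF IH[OF order_refl] sT] cond_i segm_sol_in_PC[OF s0(1) sT] s0 by force
  also have "\<dots> \<le> window_factor tk \<tau> \<sigma> c (Suc j) * envelope j ?s"
    using mult_right_mono[OF window_factor_ge_1 envelope_nonneg] by simp
  finally show ?thesis .
next
  case False
  hence "segm \<tau> x (tk (Suc j)) r = x (tk (Suc j) + r)" using r unfolding segm_def by simp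
  thus ?thesis using V1ext_window_le[OF IH sT, of "tk (Suc j) + r"] r False by simp
qed

lemma V_sol_impulse_le:
  assumes IH: "\<And>i. i \<le> j \<Longrightarrow> envelope_holds i" and sT: "ereal (tk (Suc j)) < T"
  shows "V_sol (tk (Suc j)) \<le> exp (- \<sigma>) * envelope j (tk (Suc j))"
proof -
  let ?s = "tk (Suc j)" and ?L = "Lim (at_left (tk (Suc j))) x" and ?\<psi> = "segm \<tau> x (tk (Suc j))"
  let ?W = "window_factor tk \<tau> \<sigma> c (Suc j)" and ?E = "envelope j (tk (Suc j))"
  have s0: "0 \<le> ?s" "t0 \<le> ?s" using t0_le_tk t0_nonneg by (auto intro: order_trans)
  have \<psi>: "?\<psi> \<in> PC \<tau>" using segm_sol_in_PC s0 sT by simp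
  have sup: "(SUP r\<in>{-\<tau>..0}. V1ext V1 (?s + r) (?\<psi> r)) \<le> ?W * ?E"
    using tau_pos V1ext_segm_le[OF IH sT] by (intro cSUP_least) auto
  have "x ?s = ?L + g ?s ?\<psi>" using sol t0_less_tk_Suc sT unfolding is_sol_def by auto
  hence V1_jump: "V1 ?s (x ?s) \<le> \<rho>1 * V1 ?s ?L + \<rho>2 * (?W * ?E)"
    using cond_iii[rule_format, OF s0(1) \<psi>] mult_left_mono[OF sup params(2)] s0
    by (simp add: V1left_eq_V1ext V1ext_def segm_def)
  have V2_le: "V2 ?s ?\<psi> \<le> \<kappa> * (?W * ?E)"
    using order_trans[OF cond_iv[rule_format, OF s0(1) \<psi>] mult_left_mono[OF sup]] params(3) by simp
  have "V_sol ?s = V1 ?s (x ?s) + V2 ?s ?\<psi>" unfolding V_sol_def using V2_sol_no_jump[OF sT] by simp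
  also have "\<dots> \<le> jump_gain \<rho>1 \<rho>2 \<kappa> ?W * ?E"
    using cond_i \<psi> s0 by (intro jump_gain_bound[OF params(1,2) _ left_limit_le_envelope[OF IH[OF order_refl] sT]
        V2_le V1_jump]) blast
  also have "\<dots> \<le> exp (- \<sigma>) * ?E"
    using jump_condition envelope_nonneg by (intro mult_right_mono) auto
  finally show ?thesis .
qed

lemma envelope_holds_Suc:
  assumes "\<And>i. i \<le> j \<Longrightarrow> envelope_holds i"
  shows "envelope_holds (Suc j)"
  unfolding envelope_holds_def
proof (intro allI impI)
  fix u assume u: "tk (Suc j) \<le> u \<and> u < tk (Suc (Suc j)) \<and> ereal u < T"
  hence sT: "ereal (tk (Suc j)) < T" by (meson ereal_less_eq(3) order.strict_trans1)
  have "V_sol u \<le> V_sol (tk (Suc j)) * exp (- c * (u - tk (Suc j)))"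
    using V_sol_between_impulses[of "Suc j" "tk (Suc j)" u] u by auto
  also have "\<dots> \<le> exp (- \<sigma>) * envelope j (tk (Suc j)) * exp (- c * (u - tk (Suc j)))"
    using V_sol_impulse_le[OF assms sT] by (intro mult_right_mono) auto
  also have "\<dots> = envelope (Suc j) u" unfolding envelope_def by (simp add: algebra_simps flip: exp_add)
  finally show "V_sol u \<le> envelope (Suc j) u" .
qed

lemma envelope_holds: "envelope_holds j"
proof (induction j rule: less_induct)
  case (less j)
  show ?case
  proof (cases j)
    case (Suc i)
    thus ?thesis using less envelope_holds_Suc[of i] by (simp add: less_Suc_eq_le)
  qed (simp add: envelope_holds_0)
qed

lemma decay_estimate:
  assumes u: "t0 \<le> u" "ereal u < T"
  shows "\<alpha>1 (norm (x u)) \<le> initial_bound * exp \<mu> * exp (- lam * (u - t0))"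
proof -
  obtain j where j: "tk j \<le> u" "u < tk (Suc j)" using impulse_interval_exists[OF u(1)] by blast
  have "- \<sigma> * Nimp tk u t0 - c * (u - t0) \<le> \<mu> - lam * (u - t0)"
  proof (cases "u = t0")
    case True
    thus ?thesis using params(5) Nimp_t0[of 0 t0] tk0 t0_less_tk_Suc[of 0] by simp
  next
    case False
    hence "- \<sigma> * Nimp tk u t0 - (c - lam) * (u - t0) \<le> \<mu>" using dwell_condition u by simp
    thus ?thesis by (simp add: algebra_simps)
  qed
  hence "envelope j u \<le> initial_bound * exp (\<mu> - lam * (u - t0))"
    using Nimp_t0[OF j] initial_bound_nonneg unfolding envelope_def by (auto intro: mult_left_mono)
  moreover have "\<alpha>1 (norm (x u)) \<le> envelope j u"
    using alpha1_le_V1_sol[OF u] V1_le_V_sol[OF u] envelope_holds[of j] j u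
    unfolding envelope_holds_def by force
  ultimately show ?thesis by (simp add: mult.assoc flip: exp_add)
qed

lemma uniform_bound:
  assumes "t0 \<le> u" "ereal u < T"
  shows "\<alpha>1 (norm (x u)) \<le> exp \<mu> * (\<alpha>2 (normtau \<tau> \<phi>) + \<alpha>3 (normtau \<tau> \<phi>))"
proof -
  have "\<alpha>1 (norm (x u)) \<le> initial_bound * exp \<mu> * exp (- lam * (u - t0))"
    by (rule decay_estimate[OF assms])
  also have "\<dots> \<le> initial_bound * exp \<mu> * 1"
    using assms params(4) initial_bound_nonneg by (intro mult_left_mono) auto
  finally show ?thesis unfolding initial_bound_def by (simp add: mult.commute)
qed

lemma sol_bounded: "bounded (x ` {t. t0 - \<tau> \<le> t \<and> ereal t < T})"
proof -
  obtain R where R: "R \<ge> 0" "\<alpha>1 R > exp \<mu> * initial_bound"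
    using K1 unfolding class_Kinf_def by blast
  have "norm (x u) \<le> max R (normtau \<tau> \<phi>)" if "t0 - \<tau> \<le> u" "ereal u < T" for u
  proof (cases "t0 \<le> u")
    case True
    have "\<alpha>1 (norm (x u)) < \<alpha>1 R"
      using uniform_bound[OF True that(2)] R(2) unfolding initial_bound_def by simp
    hence "norm (x u) < R" using class_Kinf_less_imp_less[OF K1] R(1) by simp
    thus ?thesis by simp
  next
    case False
    thus ?thesis using x_initial[of "u - t0"] normtau_ge[OF phi, of "u - t0"] that by simp
  qed
  thus ?thesis unfolding bounded_iff by blast
qed

lemma sol_tendsto_zero:
  assumes "T = \<infinity>"
  shows "(x \<longlongrightarrow> 0) at_top"
proof (rule tendsto_zero_of_class_Kinf_exp_bound[OF K1 params(4)])
  show "\<alpha>1 (norm (x u)) \<le> initial_bound * exp \<mu> * exp (- lam * (u - t0))" if "t0 \<le> u" for u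
    using decay_estimate[OF that] assms by simp
qed

end

theorem theorem1:
  fixes f g :: "real \<Rightarrow> (real \<Rightarrow> real ^ 'n) \<Rightarrow> real ^ 'n"
    and \<tau> t0 :: real and tk :: "nat \<Rightarrow> real"
    and V1 :: "real \<Rightarrow> real ^ 'n \<Rightarrow> real"
    and V2 :: "real \<Rightarrow> (real \<Rightarrow> real ^ 'n) \<Rightarrow> real"
    and \<alpha>1 \<alpha>2 \<alpha>3 :: "real \<Rightarrow> real"
    and c \<rho>1 \<rho>2 \<mu> lam \<kappa> :: real
  assumes tau_pos: "\<tau> > 0"
    and f0: "\<forall>t\<ge>0. f t (\<lambda>s. 0) = 0" and g0: "\<forall>t\<ge>0. g t (\<lambda>s. 0) = 0"
    and tk0: "tk 0 = t0" and t0_nonneg: "t0 \<ge> 0"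
    and tk_mono: "strict_mono tk" and tk_lim: "filterlim tk at_top sequentially"
    and sol_exists: "\<forall>s\<ge>0. \<forall>\<phi>\<in>PC \<tau>. \<exists>T x. is_max_sol f g \<tau> tk s \<phi> T x"
    and sol_unique: "\<forall>s \<phi> T1 T2 x y. is_sol f g \<tau> tk s \<phi> T1 x \<and> is_sol f g \<tau> tk s \<phi> T2 y \<longrightarrow>
                       (\<forall>t. s - \<tau> \<le> t \<and> ereal t < min T1 T2 \<longrightarrow> x t = y t)"
    and sol_bounded_global: "\<forall>s \<phi> T x. is_max_sol f g \<tau> tk s \<phi> T x \<and>
                       bounded (x ` {t. s - \<tau> \<le> t \<and> ereal t < T}) \<longrightarrow> T = \<infinity>"
    and V1_cls: "class_V0 V1" and V2_cls: "class_V0star \<tau> V2"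
    and K1: "class_Kinf \<alpha>1" and K2: "class_Kinf \<alpha>2" and K3: "class_Kinf \<alpha>3"
    and params: "\<rho>1 \<ge> 0" "\<rho>2 \<ge> 0" "\<mu> \<ge> 0" "lam > 0" "\<kappa> > 0"
    and cond_i: "\<forall>t\<ge>0. \<forall>\<psi>\<in>PC \<tau>.
        \<alpha>1 (norm (\<psi> 0)) \<le> V1 t (\<psi> 0) \<and> V1 t (\<psi> 0) \<le> \<alpha>2 (norm (\<psi> 0)) \<and>
        0 \<le> V2 t \<psi> \<and> V2 t \<psi> \<le> \<alpha>3 (normtau \<tau> \<psi>)"
    and cond_ii: "\<forall>t\<ge>0. \<forall>\<psi>\<in>PC \<tau>. \<forall>T x. is_sol f g \<tau> tk t \<psi> T x \<longrightarrow>
        Limsup (at_right 0) (\<lambda>h. ereal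
           (((V1 (t + h) (x (t + h)) + V2 (t + h) (seg \<tau> x (t + h)))
             - (V1 t (\<psi> 0) + V2 t \<psi>)) / h))
        \<le> ereal (- c * (V1 t (\<psi> 0) + V2 t \<psi>))"
    and cond_iii: "\<forall>t\<ge>0. \<forall>\<psi>\<in>PC \<tau>.
        V1 t (\<psi> 0 + g t \<psi>) \<le> \<rho>1 * V1left V1 t (\<psi> 0)
          + \<rho>2 * (SUP s\<in>{-\<tau>..0}. V1left V1 (t + s) (\<psi> s))"
    and cond_iv: "\<forall>t\<ge>0. \<forall>\<psi>\<in>PC \<tau>.
        V2 t \<psi> \<le> \<kappa> * (SUP s\<in>{-\<tau>..0}. V1ext V1 (t + s) (\<psi> s))"
    and cond_v: "\<exists>\<sigma>::real.
        (\<forall>t s. t0 \<le> s \<and> s < t \<longrightarrow> - \<sigma> * Nimp tk t s - (c - lam) * (t - s) \<le> \<mu>) \<and>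
        ((c > 0 \<and> \<rho>1 \<ge> 1 \<and> \<sigma> = - ln (\<rho>1 + \<rho>2 * exp (c * \<tau>))) \<or>
         (c > 0 \<and> \<rho>1 < 1 \<and> \<rho>1 + ((1 - \<rho>1) * \<kappa> + \<rho>2) * exp (c * \<tau>) \<ge> 1 \<and>
            \<sigma> = - ln (\<rho>1 + ((1 - \<rho>1) * \<kappa> + \<rho>2) * exp (c * \<tau>))) \<or>
         (c > 0 \<and> \<rho>1 < 1 \<and> \<rho>1 + ((1 - \<rho>1) * \<kappa> + \<rho>2) * exp (c * \<tau>) < 1 \<and> \<sigma> > 0 \<and>
            (\<forall>k\<ge>1. \<rho>1 * exp \<sigma> + ((1 - \<rho>1) * \<kappa> + \<rho>2) * exp (c * \<tau>)
                     * exp (\<sigma> * Nimp tk (tk k) (tk k - \<tau>)) \<le> 1)) \<or>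
         (c \<le> 0 \<and> \<rho>1 < 1 \<and> \<rho>1 + (1 - \<rho>1) * \<kappa> + \<rho>2 < 1 \<and> \<sigma> > 0 \<and>
            (\<forall>k\<ge>1. \<rho>1 * exp \<sigma> + ((1 - \<rho>1) * \<kappa> + \<rho>2)
                     * exp (\<sigma> * Nimp tk (tk k) (tk k - \<tau>)) \<le> 1)))"
  shows "(\<forall>\<epsilon>>0. \<exists>\<delta>>0. \<forall>\<phi>\<in>PC \<tau>. normtau \<tau> \<phi> < \<delta> \<longrightarrow>
            (\<forall>T x. is_sol f g \<tau> tk t0 \<phi> T x \<longrightarrow>
               (\<forall>t. t0 \<le> t \<and> ereal t < T \<longrightarrow> norm (x t) < \<epsilon>))) \<and>
         (\<forall>\<phi>\<in>PC \<tau>. \<forall>T x. is_max_sol f g \<tau> tk t0 \<phi> T x \<longrightarrow>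
            T = \<infinity> \<and> (x \<longlongrightarrow> 0) at_top)"
proof -
  obtain \<sigma> where dwell: "\<forall>t s. t0 \<le> s \<and> s < t \<longrightarrow> - \<sigma> * Nimp tk t s - (c - lam) * (t - s) \<le> \<mu>"
    and jump: "\<forall>k\<ge>1. jump_gain \<rho>1 \<rho>2 \<kappa> (window_factor tk \<tau> \<sigma> c k) \<le> exp (- \<sigma>)"
    using cond_v jump_gain_window_factor_le[OF params(2)] by blast
  have sol: "impulsive_solution f g \<tau> t0 tk V1 V2 \<alpha>1 \<alpha>2 \<alpha>3 c \<rho>1 \<rho>2 \<kappa> \<sigma> lam \<mu> \<phi> T x"
    if "\<phi> \<in> PC \<tau>" "is_sol f g \<tau> tk t0 \<phi> T x" for \<phi> T x
    unfolding impulsive_solution_def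
    using that tau_pos tk0 t0_nonneg tk_mono tk_lim V1_cls V2_cls K1 K2 K3 params
      cond_i cond_ii cond_iii cond_iv jump dwell by (intro conjI) assumption+
  have "\<forall>\<epsilon>>0. \<exists>\<delta>>0. \<forall>\<phi>\<in>PC \<tau>. normtau \<tau> \<phi> < \<delta> \<longrightarrow>
          (\<forall>T x. is_sol f g \<tau> tk t0 \<phi> T x \<longrightarrow> (\<forall>t. t0 \<le> t \<and> ereal t < T \<longrightarrow> norm (x t) < \<epsilon>))"
    using impulsive_solution.uniform_bound[OF sol] normtau_nonneg[OF _ less_imp_le[OF tau_pos]]
    by (intro stable_of_class_Kinf_bound[OF K1 class_Kinf_add[OF K2 K3] exp_gt_zero[of \<mu>]]) auto
  moreover have "T = \<infinity> \<and> (x \<longlongrightarrow> 0) at_top" if "\<phi> \<in> PC \<tau>" "is_max_sol f g \<tau> tk t0 \<phi> T x" for \<phi> T x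
  proof -
    interpret impulsive_solution f g \<tau> t0 tk V1 V2 \<alpha>1 \<alpha>2 \<alpha>3 c \<rho>1 \<rho>2 \<kappa> \<sigma> lam \<mu> \<phi> T x
      using sol that unfolding is_max_sol_def by blast
    have "T = \<infinity>" using sol_bounded_global that(2) sol_bounded by blast
    thus ?thesis using sol_tendsto_zero by blast
  qed
  ultimately show ?thesis by blast
qed

end
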